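(* Let $n>k\ge1$ be coprime integers, $\eta$ in the upper half-plane, $\Lambda=\mathbb{Z}+\mathbb{Z}\eta$, $E=\mathbb{C}/\Lambda$, and let $N\in\mathrm{GL}(V)$ be $N(x_\alpha)=x_{-\alpha}$. For all $\tau\in\mathbb{C}$, $N$ extends to algebra isomorphisms $S_{n,k}(E,\tau)\to S_{n,k}(E,-\tau)$ and $S_{n,k}(E,\tau)\to S_{n,k}(E,\tau)^{\mathrm{op}}$. In particular $S_{n,k}(E,\tau)\cong S_{n,k}(E,\tau)^{\mathrm{op}}=S_{n,k}(E,-\tau)$ (the latter equality as quotients of the tensor algebra $TV$).
   Context: Write $e(z)=e^{2\pi i z}$ and $\theta(z)=\sum_{m\in\mathbb{Z}}(-1)^m e\big(mz+\tfrac12 m(m-1)\eta\big)$. For $\alpha\in\mathbb{Z}$ put $\theta_\alpha(z)=e\big(\alpha z+\tfrac{\alpha}{2n}+\tfrac{\alpha(\alpha-n)}{2n}\eta\big)\prod_{m=0}^{n-1}\theta\big(z+\tfrac mn+\tfrac{\alpha}{n}\eta\big)$, regarded as indexed by $\alpha\in\mathbb{Z}_n$. Let $V$ be an $n$-dimensional complex vector space with basis $x_i$, $i\in\mathbb{Z}_n$, and $TV$ its tensor algebra. For $\tau\in\mathbb{C}\setminus\frac1n\Lambda$ and $z\in\mathbb{C}$, define $R_\tau(z)\in\mathrm{End}(V\otimes V)$ by $$R_\tau(z)(x_i\otimes x_j)=\frac{\theta_0(-z)\cdots\theta_{n-1}(-z)}{\theta_1(0)\cdots\theta_{n-1}(0)}\sum_{r\in\mathbb{Z}_n}\frac{\theta_{j-i+r(k-1)}(-z+\tau)}{\theta_{j-i-r}(-z)\,\theta_{kr}(\tau)}\,x_{j-r}\otimes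 x_{i+r}.$$ Define $S_{n,k}(E,\tau):=TV/(\ker R_\tau(\tau))$ for $\tau\notin\frac1n\Lambda$; for $\tau\in\frac1n\Lambda$, $R_\tau(\tau)$ is replaced by $R_+(\tau):=\lim_{t\to0}R_t(t+\tau)$. *)

theory Defs
  imports "HOL-Analysis.Analysis"
begin

definition e :: "complex \<Rightarrow> complex" where
  "e z = exp (2 * of_real pi * \<i> * z)"

definition theta :: "complex \<Rightarrow> complex \<Rightarrow> complex" where
  "theta \<eta> z = infsum (\<lambda>m::int. ((-1::complex) powi m) *
      e (of_int m * z + of_int m * (of_int m - 1) / 2 * \<eta>)) UNIV"

text \<open>theta_alpha for alpha in Z (it is n-periodic in alpha, so indexed by Z_n)\<close>
definition theta_a :: "nat \<Rightarrow> complex \<Rightarrow> int \<Rightarrow> complex \<Rightarrow> complex" where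
  "theta_a n \<eta> \<alpha> z =
     e (of_int \<alpha> * z + of_int \<alpha> / (2 * of_nat n)
        + of_int (\<alpha> * (\<alpha> - int n)) / (2 * of_nat n) * \<eta>)
     * (\<Prod>m<n. theta \<eta> (z + of_nat m / of_nat n + of_int \<alpha> / of_nat n * \<eta>))"

definition lat_n :: "nat \<Rightarrow> complex \<Rightarrow> complex set" where
  "lat_n n \<eta> = {(of_int a + of_int b * \<eta>) / of_nat n | a b. True}"

definition Rpref :: "nat \<Rightarrow> complex \<Rightarrow> complex \<Rightarrow> complex" where
  "Rpref n \<eta> z = (\<Prod>a<n. theta_a n \<eta> (int a) (- z)) / (\<Prod>a\<in>{1..<n}. theta_a n \<eta> (int a) 0)"

text \<open>Matrix entry of R_tau(z): coefficient of x_a \<otimes> x_b in R_tau(z)(x_i \<otimes> x_j),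
  for a b i j in {0..<n} representing Z_n.  The summand with index r contributes
  to x_(j-r) \<otimes> x_(i+r); for given (a,b,i,j) the only possible r is r = b - i (mod n),
  and then a = j - r requires a + b = i + j (mod n).\<close>
definition Rent :: "nat \<Rightarrow> nat \<Rightarrow> complex \<Rightarrow> complex \<Rightarrow> complex \<Rightarrow> nat \<Rightarrow> nat \<Rightarrow> nat \<Rightarrow> nat \<Rightarrow> complex" where
  "Rent n k \<eta> \<tau> z a b i j =
     (if (a + b) mod n = (i + j) mod n then
        (let r = int b - int i in
          Rpref n \<eta> z * theta_a n \<eta> (int j - int i + r * (int k - 1)) (- z + \<tau>)
           / (theta_a n \<eta> (int j - int i - r) (- z) * theta_a n \<eta> (int k * r) \<tau>))
      else 0)"

text \<open>The operator defining the relations: R_tau(tau) for tau not in (1/n)Lambda,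
  and R_+(tau) = lim_{t->0} R_t(t + tau) (entrywise) otherwise.\<close>
definition Rrel :: "nat \<Rightarrow> nat \<Rightarrow> complex \<Rightarrow> complex \<Rightarrow> nat \<Rightarrow> nat \<Rightarrow> nat \<Rightarrow> nat \<Rightarrow> complex" where
  "Rrel n k \<eta> \<tau> =
     (if \<tau> \<in> lat_n n \<eta> then (\<lambda>a b i j. Lim (at 0) (\<lambda>t. Rent n k \<eta> t (t + \<tau>) a b i j))
      else Rent n k \<eta> \<tau> \<tau>)"

text \<open>Elements of TV are finitely supported coefficient functions on words over the
  basis indices {0..<n} (= Z_n); the word [i1,...,im] stands for x_i1 \<otimes> ... \<otimes> x_im.\<close>
definition TV :: "nat \<Rightarrow> (nat list \<Rightarrow> complex) set" where
  "TV n = {f. finite {w. f w \<noteq> 0} \<and> (\<forall>w. f w \<noteq> 0 \<longrightarrow> (\<forall>x\<in>set w. x < n))}"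

definition tmul :: "(nat list \<Rightarrow> complex) \<Rightarrow> (nat list \<Rightarrow> complex) \<Rightarrow> nat list \<Rightarrow> complex" where
  "tmul f g w = (\<Sum>i\<le>length w. f (take i w) * g (drop i w))"

definition xgen :: "nat \<Rightarrow> nat list \<Rightarrow> complex" where
  "xgen \<alpha> = (\<lambda>w. if w = [\<alpha>] then 1 else 0)"

definition tone :: "nat list \<Rightarrow> complex" where
  "tone = (\<lambda>w. if w = [] then 1 else 0)"

definition kerR :: "nat \<Rightarrow> nat \<Rightarrow> complex \<Rightarrow> complex \<Rightarrow> (nat list \<Rightarrow> complex) set" where
  "kerR n k \<eta> \<tau> = {f \<in> TV n. (\<forall>w. f w \<noteq> 0 \<longrightarrow> length w = 2) \<and>
      (\<forall>a<n. \<forall>b<n. (\<Sum>i<n. \<Sum>j<n. Rrel n k \<eta> \<tau> a b i j * f [i, j]) = 0)}"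

inductive_set gen_ideal :: "nat \<Rightarrow> (nat list \<Rightarrow> complex) set \<Rightarrow> (nat list \<Rightarrow> complex) set"
  for n K where
  gen: "x \<in> K \<Longrightarrow> x \<in> gen_ideal n K"
| zero: "(\<lambda>_. 0) \<in> gen_ideal n K"
| add: "x \<in> gen_ideal n K \<Longrightarrow> y \<in> gen_ideal n K \<Longrightarrow> (\<lambda>w. x w + y w) \<in> gen_ideal n K"
| lmul: "x \<in> gen_ideal n K \<Longrightarrow> t \<in> TV n \<Longrightarrow> tmul t x \<in> gen_ideal n K"
| rmul: "x \<in> gen_ideal n K \<Longrightarrow> t \<in> TV n \<Longrightarrow> tmul x t \<in> gen_ideal n K"

definition Sideal :: "nat \<Rightarrow> nat \<Rightarrow> complex \<Rightarrow> complex \<Rightarrow> (nat list \<Rightarrow> complex) set" where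
  "Sideal n k \<eta> \<tau> = gen_ideal n (kerR n k \<eta> \<tau>)"

definition qcls :: "nat \<Rightarrow> (nat list \<Rightarrow> complex) set \<Rightarrow> (nat list \<Rightarrow> complex) \<Rightarrow> (nat list \<Rightarrow> complex) set" where
  "qcls n I f = {g \<in> TV n. (\<lambda>w. f w - g w) \<in> I}"

definition qcar :: "nat \<Rightarrow> (nat list \<Rightarrow> complex) set \<Rightarrow> (nat list \<Rightarrow> complex) set set" where
  "qcar n I = qcls n I ` TV n"

definition qrep :: "(nat list \<Rightarrow> complex) set \<Rightarrow> nat list \<Rightarrow> complex" where
  "qrep A = (SOME f. f \<in> A)"

definition qadd where
  "qadd n I A B = qcls n I (\<lambda>w. qrep A w + qrep B w)"

definition qmul where
  "qmul n I A B = qcls n I (tmul (qrep A) (qrep B))"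

definition qscale where
  "qscale n I (c::complex) A = qcls n I (\<lambda>w. c * qrep A w)"

definition alg_iso where
  "alg_iso n I J \<Phi> \<longleftrightarrow> bij_betw \<Phi> (qcar n I) (qcar n J) \<and>
     \<Phi> (qcls n I tone) = qcls n J tone \<and>
     (\<forall>A\<in>qcar n I. \<forall>B\<in>qcar n I.
        \<Phi> (qadd n I A B) = qadd n J (\<Phi> A) (\<Phi> B) \<and>
        \<Phi> (qmul n I A B) = qmul n J (\<Phi> A) (\<Phi> B)) \<and>
     (\<forall>c. \<forall>A\<in>qcar n I. \<Phi> (qscale n I c A) = qscale n J c (\<Phi> A))"

definition alg_iso_op where
  "alg_iso_op n I J \<Phi> \<longleftrightarrow> bij_betw \<Phi> (qcar n I) (qcar n J) \<and>
     \<Phi> (qcls n I tone) = qcls n J tone \<and>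
     (\<forall>A\<in>qcar n I. \<forall>B\<in>qcar n I.
        \<Phi> (qadd n I A B) = qadd n J (\<Phi> A) (\<Phi> B) \<and>
        \<Phi> (qmul n I A B) = qmul n J (\<Phi> B) (\<Phi> A)) \<and>
     (\<forall>c. \<forall>A\<in>qcar n I. \<Phi> (qscale n I c A) = qscale n J c (\<Phi> A))"

definition extends_N where
  "extends_N n I J \<Phi> \<longleftrightarrow> (\<forall>\<alpha><n. \<Phi> (qcls n I (xgen \<alpha>)) = qcls n J (xgen ((n - \<alpha>) mod n)))"

text \<open>Word reversal: the anti-automorphism of TV fixing V, identifying TV^op with TV\<close>
definition trev :: "(nat list \<Rightarrow> complex) \<Rightarrow> nat list \<Rightarrow> complex" where
  "trev f = (\<lambda>w. f (rev w))"

end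

theory Submission
  imports Defs "HOL-Complex_Analysis.Complex_Analysis" "HOL-Number_Theory.Cong"
begin

text \<open>
  Both \<open>N \<otimes> N\<close> and the flip \<open>x\<^sub>i \<otimes> x\<^sub>j \<mapsto> x\<^sub>j \<otimes> x\<^sub>i\<close> conjugate \<open>R\<^sub>\<tau>(z)\<close> into a nonzero
  multiple of \<open>R\<^bsub>-\<tau>\<^esub>(-z)\<close>: entry by entry this is the reflection formula
  \<open>\<theta>\<^sub>\<alpha>(-z) = -e(\<alpha>/n - nz) \<theta>\<^bsub>-\<alpha>\<^esub>(z)\<close>, and the exponential factors multiply to
  \<open>e(n\<^sup>2z)\<close>. Hence \<open>N\<close> (an automorphism of \<open>TV\<close>) and word reversal (an anti-automorphism)
  both carry \<open>ker R\<^sub>\<tau>(\<tau>)\<close> onto \<open>ker R\<^bsub>-\<tau>\<^esub>(-\<tau>)\<close>, so they induce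
  \<open>S(E,\<tau>) \<cong> S(E,-\<tau>)\<close> and \<open>S(E,-\<tau>) = S(E,\<tau>)\<^sup>o\<^sup>p\<close>; their composite gives \<open>S(E,\<tau>) \<cong> S(E,\<tau>)\<^sup>o\<^sup>p\<close>.

  For \<open>\<tau> \<in> \<Lambda>/n\<close> the relation between the two operators passes to the limit \<open>R\<^sub>+\<close> only
  because the limit exists. By the quasi-periodicity of \<open>\<theta>\<close> the numerator of an entry of
  \<open>R\<^sub>t(t + \<tau>)\<close> contains every \<open>\<theta>\<^sub>c(t)\<close> once, so the two theta factors of the denominator
  cancel, unless they coincide, in which case the numerator has the factor \<open>\<theta>\<^sub>0(0) = 0\<close>.
  Since \<open>\<theta>\<close> is entire and (unless all entries vanish) not identically zero, its zeros are
  isolated, so the cancellation is valid on a punctured neighbourhood of \<open>t = 0\<close>.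
\<close>

section \<open>Residues modulo \<open>n\<close>\<close>

lemma bij_betw_affine_mod:
  fixes s c :: int
  assumes "n > 0" and "s \<in> {1, -1}"
  shows "bij_betw (\<lambda>m. nat ((s * int m + c) mod int n)) {..<n} {..<n}"
proof -
  let ?f = "\<lambda>m. nat ((s * int m + c) mod int n)"
  have "inj_on ?f {..<n}"
  proof (rule inj_onI)
    fix x y assume x: "x \<in> {..<n}" and y: "y \<in> {..<n}" and "?f x = ?f y"
    then have "[s * int x + c = s * int y + c] (mod int n)"
      using assms(1) by (simp add: cong_def nat_eq_iff2)
    then have "[s * int x = s * int y] (mod int n)"
      by (simp only: cong_add_rcancel)
    then have "[int x = int y] (mod int n)"
      using assms(2) by (auto simp: cong_minus_minus_iff)
    with x y show "x = y"
      by (simp add: cong_def)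
  qed
  moreover have "?f ` {..<n} \<subseteq> {..<n}"
    using assms(1) by (auto simp: nat_less_iff)
  ultimately show ?thesis
    by (simp add: bij_betw_def card_subset_eq card_image)
qed

lemma prod_affine_reindex_mod:
  fixes g :: "int \<Rightarrow> 'a :: comm_monoid_mult" and s c :: int
  assumes "s \<in> {1, -1}" and g: "\<And>a b. [a = b] (mod int n) \<Longrightarrow> g a = g b"
  shows "(\<Prod>m<n. g (s * int m + c)) = (\<Prod>m<n. g (int m))"
proof (cases "n = 0")
  case False
  have "(\<Prod>m<n. g (s * int m + c)) = (\<Prod>m<n. g (int (nat ((s * int m + c) mod int n))))"
    using False by (intro prod.cong refl g) (simp add: cong_def)
  also have "\<dots> = (\<Prod>m<n. g (int m))"
    using False assms(1) by (intro prod.reindex_bij_betw bij_betw_affine_mod) auto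
  finally show ?thesis .
qed simp

lemma mod_eq_iff_cong_int: "m mod n = q mod n \<longleftrightarrow> [int m = int q] (mod int n)"
  by (metis cong_def cong_int_iff)

definition negmod :: "nat \<Rightarrow> nat \<Rightarrow> nat" where
  "negmod n x = (n - x) mod n"

lemma negmod_less: "n > 0 \<Longrightarrow> negmod n x < n"
  unfolding negmod_def by simp

lemma negmod_negmod: "x < n \<Longrightarrow> negmod n (negmod n x) = x"
  unfolding negmod_def by (cases "x = 0") (auto simp: mod_if)

lemma cong_negmod: "x < n \<Longrightarrow> [int (negmod n x) = - int x] (mod int n)"
  unfolding negmod_def cong_def by (cases "x = 0") (auto simp: mod_if of_nat_diff)

lemma sum_negmod_reindex: "(\<Sum>i<n. g (negmod n i)) = (\<Sum>i<n. g i)"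
proof (cases "n = 0")
  case False
  have "bij_betw (negmod n) {..<n} {..<n}"
    by (rule bij_betwI[where g = "negmod n"]) (use False in \<open>auto simp: negmod_less negmod_negmod\<close>)
  then show ?thesis
    by (rule sum.reindex_bij_betw)
qed simp

lemma sum2_negmod_reindex:
  "(\<Sum>i<n. \<Sum>j<n. G (negmod n i) (negmod n j)) = (\<Sum>i<n. \<Sum>j<n. G i j)"
  using sum_negmod_reindex[where g = "\<lambda>j. G (negmod n i) j" for i]
    sum_negmod_reindex[where g = "\<lambda>i. \<Sum>j<n. G i j"] by simp

section \<open>The exponential \<open>e\<close> and the theta function\<close>

lemma e_zero [simp]: "e 0 = 1"
  unfolding e_def by simp

lemma e_add: "e (a + b) = e a * e b"
  unfolding e_def by (simp add: distrib_left exp_add)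

lemma e_diff: "e (a - b) = e a / e b"
  unfolding e_def by (simp add: right_diff_distrib exp_diff)

lemma e_neq_zero [simp]: "e a \<noteq> 0"
  unfolding e_def by simp

lemma e_of_int [simp]: "e (of_int m) = 1"
proof -
  have "e (of_int m) = exp ((2 * of_int m * pi) * \<i>)"
    unfolding e_def by (simp add: mult_ac)
  also have "\<dots> = 1"
    by (rule exp_integer_2pi) auto
  finally show ?thesis .
qed

lemma e_eqI: "a - b = of_int m \<Longrightarrow> e a = e b"
  by (metis e_diff e_of_int e_neq_zero divide_eq_1_iff)

lemma minus_e: "- e a = e (1/2 + a)"
  unfolding e_add by (simp add: e_def)

lemma norm_e: "norm (e a) = exp (- 2 * pi * Im a)"
  unfolding e_def by simp

lemma e_power: "e a ^ m = e (of_nat m * a)"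
  unfolding e_def by (simp add: exp_of_nat_mult [symmetric] mult_ac)

lemma prod_e: "(\<Prod>i\<in>A. e (f i)) = e (\<Sum>i\<in>A. f i)"
  by (induction A rule: infinite_finite_induct) (auto simp: e_add)

lemma prod_e_arith_progression:
  "(\<Prod>m<n. e (c + d * of_nat m)) = e (of_nat n * c + d * of_nat n * (of_nat n - 1) / 2)"
proof -
  have "2 * (\<Sum>m<n. of_nat m :: complex) = of_nat n * (of_nat n - 1)"
    by (induction n) (auto simp: algebra_simps)
  then show ?thesis
    unfolding prod_e by (intro arg_cong[where f = e]) (simp add: sum.distrib mult.commute flip: sum_distrib_left)
qed

lemma continuous_on_e [continuous_intros]:
  "continuous_on S f \<Longrightarrow> continuous_on S (\<lambda>x. e (f x))"
  unfolding e_def by (intro continuous_intros)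

lemma tendsto_e [tendsto_intros]: "(f \<longlongrightarrow> l) F \<Longrightarrow> ((\<lambda>x. e (f x)) \<longlongrightarrow> e l) F"
  unfolding e_def by (intro tendsto_intros)

lemma holomorphic_on_e [holomorphic_intros]:
  "f holomorphic_on S \<Longrightarrow> (\<lambda>x. e (f x)) holomorphic_on S"
  unfolding e_def by (intro holomorphic_intros)

definition theta_term :: "complex \<Rightarrow> complex \<Rightarrow> int \<Rightarrow> complex" where
  "theta_term \<eta> z m = e (of_int m / 2 + of_int m * z + of_int m * (of_int m - 1) / 2 * \<eta>)"

lemma theta_eq_infsum_theta_term: "theta \<eta> z = infsum (theta_term \<eta> z) UNIV"
proof -
  have "e a powi m = e (of_int m * a)" for a m
    unfolding e_def by (simp add: exp_power_int mult_ac)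
  moreover have "e (1/2) = -1"
    by (simp add: e_def)
  ultimately have "(-1::complex) powi m = e (of_int m / 2)" for m
    by (metis times_divide_eq_right mult_1_right)
  then show ?thesis
    unfolding theta_def theta_term_def by (simp add: e_add mult.assoc)
qed

lemma theta_plus_int: "theta \<eta> (z + of_int j) = theta \<eta> z"
  unfolding theta_eq_infsum_theta_term
proof (rule infsum_cong)
  fix m
  show "theta_term \<eta> (z + of_int j) m = theta_term \<eta> z m"
    unfolding theta_term_def by (rule e_eqI[of _ _ "m * j"]) (simp add: algebra_simps)
qed

lemma theta_reindex:
  assumes "bij h" and "\<And>m. theta_term \<eta> w (h m) = c * theta_term \<eta> z m"
  shows "theta \<eta> w = c * theta \<eta> z"
proof -
  have "theta \<eta> w = infsum (\<lambda>m. theta_term \<eta> w (h m)) UNIV"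
    unfolding theta_eq_infsum_theta_term by (rule infsum_reindex_bij_betw[OF assms(1), symmetric])
  also have "\<dots> = c * theta \<eta> z"
    unfolding assms(2) theta_eq_infsum_theta_term by (rule infsum_cmult_right')
  finally show ?thesis .
qed

lemma theta_minus: "theta \<eta> (- z) = - e (- z) * theta \<eta> z"
proof (rule theta_reindex)
  show "bij (\<lambda>m::int. 1 - m)"
    by (rule bij_betwI[where g = "\<lambda>m. 1 - m"]) auto
  show "theta_term \<eta> (- z) (1 - m) = - e (- z) * theta_term \<eta> z m" for m
    unfolding theta_term_def minus_e e_add [symmetric] by (rule e_eqI[of _ _ "- m"]) (simp add: field_simps)
qed

lemma theta_zero: "theta \<eta> 0 = 0"
  using theta_minus[of \<eta> 0] by simp

lemma theta_plus_eta: "theta \<eta> (z + \<eta>) = - e (- z) * theta \<eta> z"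
proof (rule theta_reindex)
  show "bij (\<lambda>m::int. m - 1)"
    by (rule bij_betwI[where g = "\<lambda>m. m + 1"]) auto
  show "theta_term \<eta> (z + \<eta>) (m - 1) = - e (- z) * theta_term \<eta> z m" for m
    unfolding theta_term_def minus_e e_add [symmetric] by (rule e_eqI[of _ _ "- 1"]) (simp add: field_simps)
qed

section \<open>Holomorphy of the theta function\<close>

lemma summable_norm_power_series_ratio:
  fixes a :: "nat \<Rightarrow> complex"
  assumes "0 \<le> q" "q < 1" and ratio: "\<forall>\<^sub>F m in sequentially. norm (a (Suc m)) \<le> q ^ m * norm (a m)"
  shows "summable (\<lambda>m. norm (a m * x ^ m))"
proof -
  have "(\<lambda>m. q ^ m * norm x) \<longlonglongrightarrow> 0"
    using assms by (intro tendsto_mult_left_zero LIMSEQ_power_zero) auto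
  from order_tendstoD(2)[OF this, of "1/2"]
  have "\<forall>\<^sub>F m in sequentially. q ^ m * norm x \<le> 1/2"
    by (auto elim: eventually_mono)
  with ratio have "\<forall>\<^sub>F m in sequentially. norm (a (Suc m)) \<le> q ^ m * norm (a m) \<and> q ^ m * norm x \<le> 1/2"
    by (rule eventually_conj)
  then obtain N where N: "\<And>m. m \<ge> N \<Longrightarrow> norm (a (Suc m)) \<le> q ^ m * norm (a m) \<and> q ^ m * norm x \<le> 1/2"
    unfolding eventually_sequentially by blast
  show ?thesis
  proof (rule summable_ratio_test[where c = "1/2" and N = N])
    fix m assume "m \<ge> N"
    then have "norm (a (Suc m)) * norm x \<le> (q ^ m * norm (a m)) * norm x"
      using N by (intro mult_right_mono) auto
    also have "\<dots> = (q ^ m * norm x) * norm (a m)"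
      by (simp only: mult_ac)
    also have "\<dots> \<le> 1/2 * norm (a m)"
      using N \<open>m \<ge> N\<close> by (intro mult_right_mono) auto
    finally have "norm (a (Suc m)) * norm x * norm x ^ m \<le> 1/2 * norm (a m) * norm x ^ m"
      by (intro mult_right_mono) auto
    then show "norm (norm (a (Suc m) * x ^ Suc m)) \<le> 1/2 * norm (norm (a m * x ^ m))"
      by (simp add: norm_mult norm_power mult.assoc)
  qed simp
qed

lemma holomorphic_on_power_series_everywhere:
  fixes a :: "nat \<Rightarrow> complex"
  assumes "\<And>x. summable (\<lambda>m. norm (a m * x ^ m))" and "f holomorphic_on S"
  shows "(\<lambda>z. \<Sum>m. a m * f z ^ m) holomorphic_on S"
proof -
  have summable: "\<And>x. summable (\<lambda>m. a m * x ^ m)"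
    using assms(1) by (rule summable_norm_cancel)
  have "(\<lambda>x. \<Sum>m. a m * x ^ m) field_differentiable (at x)" for x
    unfolding field_differentiable_def by (rule exI, rule termdiffs_strong_converges_everywhere[OF summable])
  then have "(\<lambda>x. \<Sum>m. a m * x ^ m) holomorphic_on UNIV"
    by (simp add: holomorphic_on_def field_differentiable_at_within)
  from holomorphic_on_compose_gen[OF assms(2) this] show ?thesis
    by (simp add: o_def)
qed

definition theta_coeff :: "complex \<Rightarrow> int \<Rightarrow> complex" where
  "theta_coeff \<eta> m = e (of_int m / 2 + of_int m * (of_int m - 1) / 2 * \<eta>)"

lemma theta_term_eq: "theta_term \<eta> z m = theta_coeff \<eta> m * e (of_int m * z)"
  unfolding theta_term_def theta_coeff_def by (simp add: e_add [symmetric] add_ac)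

lemma theta_coeff_succ: "theta_coeff \<eta> (m + 1) = theta_coeff \<eta> m * e (1/2 + of_int m * \<eta>)"
  unfolding theta_coeff_def e_add [symmetric] by (rule arg_cong[where f = e]) (simp add: field_simps)

lemma theta_coeff_pred: "theta_coeff \<eta> (m - 1) = theta_coeff \<eta> m * e (- 1/2 - of_int (m - 1) * \<eta>)"
  unfolding theta_coeff_def e_add [symmetric] by (rule arg_cong[where f = e]) (simp add: field_simps)

lemma summable_theta_coeff_series:
  assumes "Im \<eta> > 0"
  shows "summable (\<lambda>j. norm (theta_coeff \<eta> (int j) * x ^ j))"
    and "summable (\<lambda>j. norm (theta_coeff \<eta> (- int j - 1) * x ^ j))"
proof -
  define q where "q = exp (- 2 * pi * Im \<eta>)"
  have q: "0 \<le> q" "q < 1"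
    using assms by (auto simp: q_def)
  have norm_e_le: "norm (e (c + of_real r * \<eta>)) \<le> q ^ j" if "Im c = 0" "r \<ge> of_nat j" for c r j
  proof -
    have "norm (e (c + of_real r * \<eta>)) = exp (r * (- 2 * pi * Im \<eta>))"
      using that by (simp add: norm_e)
    also have "\<dots> \<le> exp (of_nat j * (- 2 * pi * Im \<eta>))"
      using that assms by (intro exp_mono mult_right_mono_neg) auto
    finally show ?thesis
      by (simp only: q_def exp_of_nat_mult)
  qed
  show "summable (\<lambda>j. norm (theta_coeff \<eta> (int j) * x ^ j))"
  proof (rule summable_norm_power_series_ratio[OF q always_eventually], intro allI)
    fix j
    have "norm (e (1/2 + of_real (of_nat j) * \<eta>)) \<le> q ^ j"
      by (rule norm_e_le) auto
    moreover have "theta_coeff \<eta> (int (Suc j)) = theta_coeff \<eta> (int j) * e (1/2 + of_real (of_nat j) * \<eta>)"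
      using theta_coeff_succ[of \<eta> "int j"] by (simp add: add.commute)
    ultimately show "norm (theta_coeff \<eta> (int (Suc j))) \<le> q ^ j * norm (theta_coeff \<eta> (int j))"
      by (simp add: norm_mult mult.commute[of "q ^ j"] mult_left_mono)
  qed
  show "summable (\<lambda>j. norm (theta_coeff \<eta> (- int j - 1) * x ^ j))"
  proof (rule summable_norm_power_series_ratio[OF q always_eventually], intro allI)
    fix j
    have "norm (e (- 1/2 + of_real (of_nat j + 2) * \<eta>)) \<le> q ^ j"
      by (rule norm_e_le) auto
    moreover have "theta_coeff \<eta> (- int (Suc j) - 1) = theta_coeff \<eta> (- int j - 1) * e (- 1/2 + of_real (of_nat j + 2) * \<eta>)"
      using theta_coeff_pred[of \<eta> "- int j - 1"] by (simp add: algebra_simps)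
    ultimately show "norm (theta_coeff \<eta> (- int (Suc j) - 1)) \<le> q ^ j * norm (theta_coeff \<eta> (- int j - 1))"
      by (simp add: norm_mult mult.commute[of "q ^ j"] mult_left_mono)
  qed
qed

lemma range_int_Un_negatives: "range int \<union> range (\<lambda>j. - int j - 1) = UNIV"
proof -
  have "m \<in> range int \<or> m \<in> range (\<lambda>j. - int j - 1)" for m :: int
  proof (cases "m \<ge> 0")
    case True
    then have "m = int (nat m)"
      by simp
    then show ?thesis
      by blast
  next
    case False
    then have "m = - int (nat (- m - 1)) - 1"
      by simp
    then show ?thesis
      by blast
  qed
  then show ?thesis
    by blast
qed

lemma theta_eq_power_series:
  assumes "Im \<eta> > 0"
  shows "theta \<eta> z = (\<Sum>j. theta_coeff \<eta> (int j) * e z ^ j)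
                     + e (- z) * (\<Sum>j. theta_coeff \<eta> (- int j - 1) * e (- z) ^ j)"
proof -
  have has_sum: "((\<lambda>j. a j * x ^ j) has_sum (\<Sum>j. a j * x ^ j)) UNIV"
    if "summable (\<lambda>j. norm (a j * x ^ j))" for a :: "nat \<Rightarrow> complex" and x
    by (rule norm_summable_imp_has_sum[OF that summable_sums[OF summable_norm_cancel[OF that]]])
  have "theta_term \<eta> z \<circ> int = (\<lambda>j. theta_coeff \<eta> (int j) * e z ^ j)"
    by (simp add: fun_eq_iff theta_term_eq e_power)
  then have pos: "(theta_term \<eta> z has_sum (\<Sum>j. theta_coeff \<eta> (int j) * e z ^ j)) (range int)"
    using has_sum[OF summable_theta_coeff_series(1)[OF assms]] by (simp add: has_sum_reindex)
  have "e (of_int (- int j - 1) * z) = e (- z) * e (- z) ^ j" for j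
    unfolding e_power e_add [symmetric] by (rule arg_cong[where f = e]) (simp add: algebra_simps)
  then have "theta_term \<eta> z \<circ> (\<lambda>j. - int j - 1) = (\<lambda>j. e (- z) * (theta_coeff \<eta> (- int j - 1) * e (- z) ^ j))"
    by (simp add: fun_eq_iff theta_term_eq mult_ac)
  then have neg: "(theta_term \<eta> z has_sum e (- z) * (\<Sum>j. theta_coeff \<eta> (- int j - 1) * e (- z) ^ j))
      (range (\<lambda>j. - int j - 1))"
    using has_sum_cmult_right[OF has_sum[OF summable_theta_coeff_series(2)[OF assms]]]
    by (simp add: has_sum_reindex inj_on_def)
  have "range int \<union> range (\<lambda>j. - int j - 1) = UNIV"
    by (rule range_int_Un_negatives)
  moreover have "range int \<inter> range (\<lambda>j. - int j - 1) = {}"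
    by auto
  ultimately have "(theta_term \<eta> z has_sum (\<Sum>j. theta_coeff \<eta> (int j) * e z ^ j)
      + e (- z) * (\<Sum>j. theta_coeff \<eta> (- int j - 1) * e (- z) ^ j)) UNIV"
    using has_sum_Un_disjoint[OF pos neg] by simp
  then show ?thesis
    unfolding theta_eq_infsum_theta_term by (rule infsumI)
qed

lemma holomorphic_on_theta [holomorphic_intros]:
  assumes "Im \<eta> > 0" and "f holomorphic_on S"
  shows "(\<lambda>z. theta \<eta> (f z)) holomorphic_on S"
proof -
  have "(\<lambda>z. \<Sum>j. theta_coeff \<eta> (int j) * e (f z) ^ j) holomorphic_on S"
    by (rule holomorphic_on_power_series_everywhere[OF summable_theta_coeff_series(1)[OF assms(1)]])
      (intro holomorphic_on_e assms(2))
  moreover have "(\<lambda>z. \<Sum>j. theta_coeff \<eta> (- int j - 1) * e (- f z) ^ j) holomorphic_on S"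
    by (rule holomorphic_on_power_series_everywhere[OF summable_theta_coeff_series(2)[OF assms(1)]])
      (intro holomorphic_on_e holomorphic_on_minus assms(2))
  moreover have "(\<lambda>z. e (- f z)) holomorphic_on S"
    by (intro holomorphic_on_e holomorphic_on_minus assms(2))
  ultimately show ?thesis
    unfolding theta_eq_power_series[OF assms(1)] by (intro holomorphic_on_add holomorphic_on_mult)
qed

lemma continuous_on_theta [continuous_intros]:
  assumes "Im \<eta> > 0" and "continuous_on S f"
  shows "continuous_on S (\<lambda>x. theta \<eta> (f x))"
proof -
  have "(\<lambda>z. theta \<eta> z) holomorphic_on UNIV"
    using assms(1) by (intro holomorphic_on_theta holomorphic_on_ident)
  from continuous_on_compose2[OF holomorphic_on_imp_continuous_on[OF this] assms(2)] show ?thesis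
    by simp
qed

lemma eventually_theta_neq_zero:
  assumes "Im \<eta> > 0" and "theta \<eta> w \<noteq> 0"
  shows "\<forall>\<^sub>F x in at 0. theta \<eta> (x + c) \<noteq> 0"
proof -
  have "(\<lambda>x. theta \<eta> (x + c)) holomorphic_on UNIV"
    using assms(1) by (intro holomorphic_on_theta holomorphic_intros)
  then have "\<forall>\<^sub>F x in at 0. theta \<eta> (x + c) \<noteq> 0 \<and> x \<in> UNIV"
    by (rule non_zero_neighbour_alt[of _ _ 0 "w - c"]) (use assms(2) in auto)
  then show ?thesis
    by simp
qed

section \<open>The functions \<open>\<theta>\<^sub>\<alpha>\<close>\<close>

lemma theta_shift_cong:
  assumes "[a = b] (mod int n)"
  shows "theta \<eta> (w + of_int a / of_nat n) = theta \<eta> (w + of_int b / of_nat n)"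
proof (cases "n = 0")
  case False
  from assms obtain j where "a = b + int n * j"
    by (metis cong_iff_lin cong_sym)
  then have "w + of_int a / of_nat n = (w + of_int b / of_nat n) + of_int j"
    using False by (simp add: field_simps)
  then show ?thesis
    by (simp only: theta_plus_int)
qed (use assms in \<open>simp add: cong_def\<close>)

definition theta_a_exponent :: "nat \<Rightarrow> complex \<Rightarrow> int \<Rightarrow> complex \<Rightarrow> complex" where
  "theta_a_exponent n \<eta> \<alpha> z = of_int \<alpha> * z + of_int \<alpha> / (2 * of_nat n)
     + of_int (\<alpha> * (\<alpha> - int n)) / (2 * of_nat n) * \<eta>"

lemma theta_a_eq: "theta_a n \<eta> \<alpha> z = e (theta_a_exponent n \<eta> \<alpha> z) *
    (\<Prod>m<n. theta \<eta> (z + of_nat m / of_nat n + of_int \<alpha> / of_nat n * \<eta>))"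
  unfolding theta_a_def theta_a_exponent_def ..

lemma continuous_on_theta_a [continuous_intros]:
  "Im \<eta> > 0 \<Longrightarrow> continuous_on S f \<Longrightarrow> continuous_on S (\<lambda>x. theta_a n \<eta> \<alpha> (f x))"
  unfolding theta_a_eq theta_a_exponent_def by (intro continuous_intros)

lemma theta_a_plus_n:
  assumes "n > 0"
  shows "theta_a n \<eta> (\<alpha> + int n) z = theta_a n \<eta> \<alpha> z"
proof -
  define w where "w m = z + of_nat m / of_nat n + of_int \<alpha> / of_nat n * \<eta>" for m
  define c where "c = 1/2 - z - of_int \<alpha> / of_nat n * \<eta>"
  have factor: "theta \<eta> (z + of_nat m / of_nat n + of_int (\<alpha> + int n) / of_nat n * \<eta>)
      = e (c + (- 1 / of_nat n) * of_nat m) * theta \<eta> (w m)" for m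
  proof -
    have "z + of_nat m / of_nat n + of_int (\<alpha> + int n) / of_nat n * \<eta> = w m + \<eta>"
      unfolding w_def using assms by (simp add: field_simps)
    moreover have "- e (- w m) = e (c + (- 1 / of_nat n) * of_nat m)"
      unfolding minus_e w_def c_def by (rule arg_cong[where f = e]) (simp add: field_simps)
    ultimately show ?thesis
      by (simp add: theta_plus_eta)
  qed
  have "theta_a n \<eta> (\<alpha> + int n) z = e (theta_a_exponent n \<eta> (\<alpha> + int n) z
      + (of_nat n * c + (- 1 / of_nat n) * of_nat n * (of_nat n - 1) / 2)) * (\<Prod>m<n. theta \<eta> (w m))"
    unfolding theta_a_eq factor prod.distrib prod_e_arith_progression by (simp add: e_add)
  also have "e (theta_a_exponent n \<eta> (\<alpha> + int n) z
      + (of_nat n * c + (- 1 / of_nat n) * of_nat n * (of_nat n - 1) / 2)) = e (theta_a_exponent n \<eta> \<alpha> z)"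
    by (rule e_eqI[of _ _ 1]) (use assms in \<open>simp add: theta_a_exponent_def c_def field_simps\<close>)
  finally show ?thesis
    unfolding theta_a_eq w_def .
qed

lemma theta_a_cong:
  assumes "n > 0" and "[\<alpha> = \<beta>] (mod int n)"
  shows "theta_a n \<eta> \<alpha> = theta_a n \<eta> \<beta>"
proof -
  have "theta_a n \<eta> (\<beta> + int n * j) = theta_a n \<eta> \<beta>" for j
  proof (induction j rule: int_induct[where k = 0])
    case (step1 i)
    then show ?case
      using theta_a_plus_n[OF assms(1), of \<eta> "\<beta> + int n * i"] by (simp add: algebra_simps)
  next
    case (step2 i)
    then show ?case
      using theta_a_plus_n[OF assms(1), of \<eta> "\<beta> + int n * (i - 1)"] by (simp add: algebra_simps)
  qed simp
  moreover obtain j where "\<alpha> = \<beta> + int n * j"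
    using assms(2) by (metis cong_iff_lin cong_sym)
  ultimately show ?thesis
    by (simp add: fun_eq_iff)
qed

lemma theta_a_minus:
  assumes "n > 0"
  shows "theta_a n \<eta> \<alpha> (- z) = - e (of_int \<alpha> / of_nat n - of_nat n * z) * theta_a n \<eta> (- \<alpha>) z"
proof -
  define u where "u = z + of_int (- \<alpha>) / of_nat n * \<eta>"
  define c where "c = 1/2 - z + of_int \<alpha> / of_nat n * \<eta>"
  have factor: "theta \<eta> (- z + of_nat m / of_nat n + of_int \<alpha> / of_nat n * \<eta>)
      = e (c + (1 / of_nat n) * of_nat m) * theta \<eta> (u + of_int (- 1 * int m + 0) / of_nat n)" for m
  proof -
    have "- z + of_nat m / of_nat n + of_int \<alpha> / of_nat n * \<eta> = - (u + of_int (- 1 * int m + 0) / of_nat n)"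
      unfolding u_def by (simp add: field_simps)
    then have "theta \<eta> (- z + of_nat m / of_nat n + of_int \<alpha> / of_nat n * \<eta>)
        = - e (- (u + of_int (- 1 * int m + 0) / of_nat n)) * theta \<eta> (u + of_int (- 1 * int m + 0) / of_nat n)"
      by (simp only: theta_minus)
    also have "- e (- (u + of_int (- 1 * int m + 0) / of_nat n)) = e (c + (1 / of_nat n) * of_nat m)"
      unfolding minus_e u_def c_def by (rule arg_cong[where f = e]) (simp add: field_simps)
    finally show ?thesis .
  qed
  have "(\<Prod>m<n. theta \<eta> (u + of_int (- 1 * int m + 0) / of_nat n)) = (\<Prod>m<n. theta \<eta> (u + of_int (int m) / of_nat n))"
    by (rule prod_affine_reindex_mod[where g = "\<lambda>a. theta \<eta> (u + of_int a / of_nat n)"])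
      (auto intro: theta_shift_cong)
  also have "\<dots> = (\<Prod>m<n. theta \<eta> (z + of_nat m / of_nat n + of_int (- \<alpha>) / of_nat n * \<eta>))"
    unfolding u_def by (simp add: algebra_simps)
  finally have reindex: "(\<Prod>m<n. theta \<eta> (u + of_int (- 1 * int m + 0) / of_nat n))
      = (\<Prod>m<n. theta \<eta> (z + of_nat m / of_nat n + of_int (- \<alpha>) / of_nat n * \<eta>))" .
  have "theta_a n \<eta> \<alpha> (- z) = e (theta_a_exponent n \<eta> \<alpha> (- z)
      + (of_nat n * c + (1 / of_nat n) * of_nat n * (of_nat n - 1) / 2))
      * (\<Prod>m<n. theta \<eta> (z + of_nat m / of_nat n + of_int (- \<alpha>) / of_nat n * \<eta>))"
    unfolding theta_a_eq factor prod.distrib prod_e_arith_progression reindex by (simp add: e_add)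
  also have "e (theta_a_exponent n \<eta> \<alpha> (- z) + (of_nat n * c + (1 / of_nat n) * of_nat n * (of_nat n - 1) / 2))
      = e (1/2 + (of_int \<alpha> / of_nat n - of_nat n * z) + theta_a_exponent n \<eta> (- \<alpha>) z)"
    by (rule e_eqI[of _ _ "int n - 1"]) (use assms in \<open>simp add: theta_a_exponent_def c_def field_simps\<close>)
  finally show ?thesis
    unfolding theta_a_eq e_add minus_e by (simp add: mult.assoc)
qed

lemma theta_a_plus_lattice:
  assumes "n > 0"
  shows "theta_a n \<eta> \<beta> (s + (of_int a + of_int b * \<eta>) / of_nat n)
    = e (theta_a_exponent n \<eta> \<beta> (s + (of_int a + of_int b * \<eta>) / of_nat n) - theta_a_exponent n \<eta> (\<beta> + b) s)
      * theta_a n \<eta> (\<beta> + b) s"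
proof -
  define u where "u = s + of_int (\<beta> + b) / of_nat n * \<eta>"
  have "(\<Prod>m<n. theta \<eta> (s + (of_int a + of_int b * \<eta>) / of_nat n + of_nat m / of_nat n + of_int \<beta> / of_nat n * \<eta>))
      = (\<Prod>m<n. theta \<eta> (u + of_int (1 * int m + a) / of_nat n))"
    unfolding u_def by (intro prod.cong refl arg_cong[where f = "theta \<eta>"]) (simp add: field_simps)
  also have "\<dots> = (\<Prod>m<n. theta \<eta> (u + of_int (int m) / of_nat n))"
    by (rule prod_affine_reindex_mod[where g = "\<lambda>a. theta \<eta> (u + of_int a / of_nat n)"])
      (auto intro: theta_shift_cong)
  also have "\<dots> = (\<Prod>m<n. theta \<eta> (s + of_nat m / of_nat n + of_int (\<beta> + b) / of_nat n * \<eta>))"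
    unfolding u_def by (simp add: algebra_simps)
  finally show ?thesis
    unfolding theta_a_eq e_diff by simp
qed

lemma theta_a_zero_zero:
  assumes "n > 0"
  shows "theta_a n \<eta> 0 0 = 0"
  using assms unfolding theta_a_eq by (auto intro!: prod_zero bexI[of _ 0] simp: theta_zero)

section \<open>Symmetries of the \<open>R\<close>-matrix\<close>

lemma Rpref_minus:
  assumes "n > 0"
  shows "Rpref n \<eta> (- z) = - e (of_nat n ^ 2 * z) * Rpref n \<eta> z"
proof -
  have factor: "theta_a n \<eta> (int a) (- (- z))
      = e ((1/2 + of_nat n * z) + (1 / of_nat n) * of_nat a) * theta_a n \<eta> (- 1 * int a + 0) (- z)" for a
    unfolding theta_a_minus[OF assms] minus_e by (simp add: field_simps)
  have reindex: "(\<Prod>a<n. theta_a n \<eta> (- 1 * int a + 0) (- z)) = (\<Prod>a<n. theta_a n \<eta> (int a) (- z))"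
    by (rule prod_affine_reindex_mod[where g = "\<lambda>\<alpha>. theta_a n \<eta> \<alpha> (- z)"])
      (auto intro: theta_a_cong[OF assms, THEN fun_cong])
  have "(\<Prod>a<n. theta_a n \<eta> (int a) (- (- z)))
      = e (of_nat n * (1/2 + of_nat n * z) + (1 / of_nat n) * of_nat n * (of_nat n - 1) / 2)
        * (\<Prod>a<n. theta_a n \<eta> (int a) (- z))"
    unfolding factor prod.distrib prod_e_arith_progression reindex ..
  also have "e (of_nat n * (1/2 + of_nat n * z) + (1 / of_nat n) * of_nat n * (of_nat n - 1) / 2)
      = - e (of_nat n ^ 2 * z)"
    unfolding minus_e by (rule e_eqI[of _ _ "int n - 1"]) (use assms in \<open>simp add: field_simps power2_eq_square\<close>)
  finally show ?thesis
    unfolding Rpref_def by simp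
qed

definition R_entry :: "nat \<Rightarrow> complex \<Rightarrow> int \<Rightarrow> int \<Rightarrow> int \<Rightarrow> complex \<Rightarrow> complex \<Rightarrow> complex" where
  "R_entry n \<eta> A B C t z = Rpref n \<eta> z * theta_a n \<eta> A (- z + t) / (theta_a n \<eta> B (- z) * theta_a n \<eta> C t)"

lemma Rent_eq_R_entry:
  "Rent n k \<eta> t z a b i j = (if (a + b) mod n = (i + j) mod n then
     R_entry n \<eta> (int j - int i + (int b - int i) * (int k - 1)) (int j - int i - (int b - int i))
       (int k * (int b - int i)) t z else 0)"
  unfolding Rent_def R_entry_def Let_def ..

lemma R_entry_minus:
  assumes "n > 0" and "A = B + C"
    and "[A' = - A] (mod int n)" "[B' = - B] (mod int n)" "[C' = - C] (mod int n)"
  shows "R_entry n \<eta> A' B' C' (- t) (- z) = e (of_nat n ^ 2 * z) * R_entry n \<eta> A B C t z"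
proof -
  have theta_a_neg: "theta_a n \<eta> X' (- w) = - e (- of_int X / of_nat n - of_nat n * w) * theta_a n \<eta> X w"
    if "[X' = - X] (mod int n)" for X X' w
    using theta_a_minus[OF assms(1), of \<eta> "- X" w] theta_a_cong[OF assms(1) that] by simp
  have "e (- of_int A / of_nat n - of_nat n * (- z + t))
      = e (- of_int B / of_nat n - of_nat n * (- z)) * e (- of_int C / of_nat n - of_nat n * t)"
    unfolding e_add [symmetric] by (rule arg_cong[where f = e]) (use assms(1,2) in \<open>simp add: field_simps\<close>)
  then show ?thesis
    unfolding R_entry_def Rpref_minus[OF assms(1)]
    using theta_a_neg[OF assms(3), of "- z + t"] theta_a_neg[OF assms(4), of "- z"] theta_a_neg[OF assms(5), of t]
    by (simp add: field_simps)
qed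

lemma Rent_minus:
  assumes "n > 0"
    and iff: "(a' + b') mod n = (i' + j') mod n \<longleftrightarrow> (a + b) mod n = (i + j) mod n"
    and cong: "(a + b) mod n = (i + j) mod n \<Longrightarrow>
      [int b' - int i' = - (int b - int i)] (mod int n) \<and> [int j' - int i' = - (int j - int i)] (mod int n)"
  shows "Rent n k \<eta> (- t) (- z) a' b' i' j' = e (of_nat n ^ 2 * z) * Rent n k \<eta> t z a b i j"
proof (cases "(a + b) mod n = (i + j) mod n")
  case True
  define r r' d d' where "r = int b - int i" and "r' = int b' - int i'"
    and "d = int j - int i" and "d' = int j' - int i'"
  from cong[OF True] have r': "[r' = - r] (mod int n)" and d': "[d' = - d] (mod int n)"
    unfolding r_def r'_def d_def d'_def by auto
  have "R_entry n \<eta> (d' + r' * (int k - 1)) (d' - r') (int k * r') (- t) (- z)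
      = e (of_nat n ^ 2 * z) * R_entry n \<eta> (d + r * (int k - 1)) (d - r) (int k * r) t z"
  proof (rule R_entry_minus[OF assms(1)])
    show "d + r * (int k - 1) = d - r + int k * r"
      by (simp add: algebra_simps)
    show "[d' + r' * (int k - 1) = - (d + r * (int k - 1))] (mod int n)"
      using cong_add[OF d' cong_mult[OF r' cong_refl[of "int k - 1"]]] by (simp add: algebra_simps)
    show "[d' - r' = - (d - r)] (mod int n)"
      using cong_diff[OF d' r'] by simp
    show "[int k * r' = - (int k * r)] (mod int n)"
      using cong_mult[OF cong_refl[of "int k"] r'] by simp
  qed
  then show ?thesis
    using True iff unfolding Rent_eq_R_entry r_def r'_def d_def d'_def by simp
qed (use iff in \<open>simp add: Rent_eq_R_entry\<close>)

lemma Rent_minus_negmod: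
  assumes "a < n" "b < n" "i < n" "j < n"
  shows "Rent n k \<eta> (- t) (- z) (negmod n a) (negmod n b) (negmod n i) (negmod n j)
    = e (of_nat n ^ 2 * z) * Rent n k \<eta> t z a b i j"
proof (rule Rent_minus)
  note neg = assms[THEN cong_negmod]
  have "[int (negmod n a + negmod n b) = - int (a + b)] (mod int n)"
    using cong_add[OF neg(1,2)] by simp
  moreover have "[int (negmod n i + negmod n j) = - int (i + j)] (mod int n)"
    using cong_add[OF neg(3,4)] by simp
  ultimately have "[int (negmod n a + negmod n b) = int (negmod n i + negmod n j)] (mod int n)
      \<longleftrightarrow> [- int (a + b) = - int (i + j)] (mod int n)"
    by (meson cong_sym cong_trans)
  then show "(negmod n a + negmod n b) mod n = (negmod n i + negmod n j) mod n
      \<longleftrightarrow> (a + b) mod n = (i + j) mod n"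
    by (simp only: mod_eq_iff_cong_int cong_minus_minus_iff)
  show "[int (negmod n b) - int (negmod n i) = - (int b - int i)] (mod int n)
      \<and> [int (negmod n j) - int (negmod n i) = - (int j - int i)] (mod int n)"
    using cong_diff[OF neg(2,3)] cong_diff[OF neg(4,3)] by simp
qed (use assms in auto)

lemma Rent_minus_swap:
  assumes "n > 0"
  shows "Rent n k \<eta> (- t) (- z) b a j i = e (of_nat n ^ 2 * z) * Rent n k \<eta> t z a b i j"
proof (rule Rent_minus[OF assms])
  assume "(a + b) mod n = (i + j) mod n"
  then have "[int a + int b = int i + int j] (mod int n)"
    by (simp add: mod_eq_iff_cong_int)
  then have "[int a + int b - (int b + int j) = int i + int j - (int b + int j)] (mod int n)"
    by (rule cong_diff[OF _ cong_refl])
  then show "[int a - int j = - (int b - int i)] (mod int n) \<and> [int i - int j = - (int j - int i)] (mod int n)"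
    by simp
qed (simp add: add.commute)

section \<open>The limit \<open>R\<^sub>+\<close> at points of \<open>\<Lambda>/n\<close>\<close>

lemma uminus_in_lat_n: "\<tau> \<in> lat_n n \<eta> \<Longrightarrow> - \<tau> \<in> lat_n n \<eta>"
proof -
  assume "\<tau> \<in> lat_n n \<eta>"
  then obtain a b where "\<tau> = (of_int a + of_int b * \<eta>) / of_nat n"
    unfolding lat_n_def by blast
  then have "- \<tau> = (of_int (- a) + of_int (- b) * \<eta>) / of_nat n"
    by (simp add: minus_divide_left)
  then show ?thesis
    unfolding lat_n_def by blast
qed

lemma uminus_in_lat_n_iff: "- \<tau> \<in> lat_n n \<eta> \<longleftrightarrow> \<tau> \<in> lat_n n \<eta>"
  using uminus_in_lat_n[of "- \<tau>"] uminus_in_lat_n[of \<tau>] by auto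

lemma theta_a_minus_plus_lattice:
  assumes "n > 0" and \<tau>: "\<tau> = (of_int a + of_int b * \<eta>) / of_nat n"
  obtains F where "\<And>\<beta>. continuous_on UNIV (F \<beta>)" and "\<And>\<beta> s. F \<beta> s \<noteq> 0"
    and "\<And>\<beta> s. theta_a n \<eta> \<beta> (- (s + \<tau>)) = F \<beta> s * theta_a n \<eta> (b - \<beta>) s"
proof
  define F where "F \<beta> s = - e (of_int \<beta> / of_nat n - of_nat n * (s + \<tau>))
    * e (theta_a_exponent n \<eta> (- \<beta>) (s + \<tau>) - theta_a_exponent n \<eta> (- \<beta> + b) s)" for \<beta> s
  show "continuous_on UNIV (F \<beta>)" for \<beta>
    unfolding F_def theta_a_exponent_def by (intro continuous_intros)
  show "F \<beta> s \<noteq> 0" for \<beta> s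
    unfolding F_def by simp
  show "theta_a n \<eta> \<beta> (- (s + \<tau>)) = F \<beta> s * theta_a n \<eta> (b - \<beta>) s" for \<beta> s
    unfolding theta_a_minus[OF assms(1)] \<tau> theta_a_plus_lattice[OF assms(1)]
    by (simp add: F_def \<tau> mult.assoc)
qed

lemma eventually_theta_a_neq_zero:
  assumes "Im \<eta> > 0" and "theta \<eta> w \<noteq> 0"
  shows "\<forall>\<^sub>F t in at 0. theta_a n \<eta> \<alpha> t \<noteq> 0"
proof -
  have "\<forall>\<^sub>F t in at 0. \<forall>m\<in>{..<n}. theta \<eta> (t + (of_nat m / of_nat n + of_int \<alpha> / of_nat n * \<eta>)) \<noteq> 0"
    using eventually_theta_neq_zero[OF assms] by (intro eventually_ball_finite) auto
  then show ?thesis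
    by eventually_elim (simp add: theta_a_eq add.assoc)
qed

lemma R_entry_plus_lattice_eq:
  assumes "n > 0" and F: "\<And>\<beta> s. theta_a n \<eta> \<beta> (- (s + \<tau>)) = F \<beta> s * theta_a n \<eta> (b - \<beta>) s"
  shows "R_entry n \<eta> A B C t (t + \<tau>)
    = (\<Prod>a<n. F (int a) t) * (\<Prod>c<n. theta_a n \<eta> (int c) t) * (F A 0 * theta_a n \<eta> (b - A) 0)
      / ((\<Prod>a\<in>{1..<n}. theta_a n \<eta> (int a) 0) * (F B t * theta_a n \<eta> (b - B) t) * theta_a n \<eta> C t)"
proof -
  have "(\<Prod>a<n. theta_a n \<eta> (- 1 * int a + b) t) = (\<Prod>c<n. theta_a n \<eta> (int c) t)"
    by (rule prod_affine_reindex_mod[where g = "\<lambda>\<alpha>. theta_a n \<eta> \<alpha> t"])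
      (auto intro: theta_a_cong[OF assms(1), THEN fun_cong])
  then have "(\<Prod>a<n. theta_a n \<eta> (int a) (- (t + \<tau>)))
      = (\<Prod>a<n. F (int a) t) * (\<Prod>c<n. theta_a n \<eta> (int c) t)"
    unfolding F prod.distrib by simp
  moreover have "theta_a n \<eta> A (- (t + \<tau>) + t) = F A 0 * theta_a n \<eta> (b - A) 0"
    using F[of A 0] by simp
  ultimately show ?thesis
    unfolding R_entry_def Rpref_def F by simp
qed

lemma R_entry_plus_lattice_eq_zero:
  assumes "n > 0" and F: "\<And>\<beta> s. theta_a n \<eta> \<beta> (- (s + \<tau>)) = F \<beta> s * theta_a n \<eta> (b - \<beta>) s"
    and "A = B + C"
    and "(\<forall>w. theta \<eta> w = 0) \<or> (\<Prod>a\<in>{1..<n}. theta_a n \<eta> (int a) 0) = 0 \<or> [b - B = C] (mod int n)"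
  shows "R_entry n \<eta> A B C t (t + \<tau>) = 0"
proof -
  have "theta_a n \<eta> (b - A) 0 = 0" if "[b - B = C] (mod int n)"
  proof -
    from that have "[(b - B) - C = C - C] (mod int n)"
      by (rule cong_diff[OF _ cong_refl])
    then have "[b - A = 0] (mod int n)"
      by (simp add: assms(3) diff_diff_eq)
    then have "theta_a n \<eta> (b - A) = theta_a n \<eta> 0"
      by (rule theta_a_cong[OF assms(1)])
    then show ?thesis
      by (simp add: theta_a_zero_zero[OF assms(1)])
  qed
  moreover have "(\<Prod>c<n. theta_a n \<eta> (int c) t) = 0" if "\<forall>w. theta \<eta> w = 0"
  proof -
    have "theta_a n \<eta> 0 t = 0"
      unfolding theta_a_eq using assms(1) that by (simp add: prod_zero_iff)
    then show ?thesis
      using assms(1) by (simp add: prod_zero_iff bexI[of _ 0])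
  qed
  ultimately show ?thesis
    using assms(4) unfolding R_entry_plus_lattice_eq[OF assms(1) F] by auto
qed

lemma prod_lessThan_remove2:
  fixes x y n :: nat
  assumes "x < n" and "y < n" and "x \<noteq> y"
  shows "(\<Prod>c<n. g c) = g x * (g y * (\<Prod>c\<in>{..<n} - {x} - {y}. g c))"
proof -
  have "(\<Prod>c<n. g c) = g x * (\<Prod>c\<in>{..<n} - {x}. g c)"
    using assms(1) by (intro prod.remove) auto
  also have "(\<Prod>c\<in>{..<n} - {x}. g c) = g y * (\<Prod>c\<in>{..<n} - {x} - {y}. g c)"
    using assms(2,3) by (intro prod.remove) auto
  finally show ?thesis .
qed

lemma R_entry_plus_lattice_convergent:
  assumes "n > 0" and "Im \<eta> > 0" and "A = B + C" and "\<tau> \<in> lat_n n \<eta>"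
  shows "\<exists>L. ((\<lambda>t. R_entry n \<eta> A B C t (t + \<tau>)) \<longlongrightarrow> L) (at 0)"
proof -
  obtain a b where "\<tau> = (of_int a + of_int b * \<eta>) / of_nat n"
    using assms(4) unfolding lat_n_def by blast
  then obtain F where F_cont: "\<And>\<beta>. continuous_on UNIV (F \<beta>)" and F_nonzero: "\<And>\<beta> s. F \<beta> s \<noteq> 0"
    and F: "\<And>\<beta> s. theta_a n \<eta> \<beta> (- (s + \<tau>)) = F \<beta> s * theta_a n \<eta> (b - \<beta>) s"
    using theta_a_minus_plus_lattice[OF assms(1)] by metis
  define D where "D = (\<Prod>a\<in>{1..<n}. theta_a n \<eta> (int a) 0)"
  show ?thesis
  proof (cases "(\<forall>w. theta \<eta> w = 0) \<or> D = 0 \<or> [b - B = C] (mod int n)")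
    case True
    then show ?thesis
      using R_entry_plus_lattice_eq_zero[OF assms(1) F assms(3)] unfolding D_def by auto
  next
    case False
    then obtain w where w: "theta \<eta> w \<noteq> 0" and D: "D \<noteq> 0" and BC: "\<not> [b - B = C] (mod int n)"
      by blast
    define x y where "x = nat ((b - B) mod int n)" and "y = nat (C mod int n)"
    have xy: "x < n" "y < n" "x \<noteq> y"
      using assms(1) BC unfolding x_def y_def by (auto simp: nat_less_iff cong_def nat_eq_iff2)
    have theta_xy: "theta_a n \<eta> (b - B) = theta_a n \<eta> (int x)" "theta_a n \<eta> C = theta_a n \<eta> (int y)"
      unfolding x_def y_def using assms(1) by (auto simp: cong_def intro!: theta_a_cong)
    define G where "G t = (\<Prod>a<n. F (int a) t) * (\<Prod>c\<in>{..<n} - {x} - {y}. theta_a n \<eta> (int c) t)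
      * (F A 0 * theta_a n \<eta> (b - A) 0) / (D * F B t)" for t
    have "\<forall>\<^sub>F t in at 0. R_entry n \<eta> A B C t (t + \<tau>) = G t"
      using eventually_theta_a_neq_zero[OF assms(2) w, of n "int x"]
        eventually_theta_a_neq_zero[OF assms(2) w, of n "int y"]
      by eventually_elim
        (simp add: R_entry_plus_lattice_eq[OF assms(1) F] theta_xy G_def D_def D[unfolded D_def] F_nonzero
          prod_lessThan_remove2[OF xy, where g = "\<lambda>c. theta_a n \<eta> (int c) t" for t])
    moreover have "continuous_on UNIV G"
      unfolding G_def using D F_nonzero by (intro continuous_intros F_cont assms(2)) auto
    ultimately have "((\<lambda>t. R_entry n \<eta> A B C t (t + \<tau>)) \<longlongrightarrow> G 0) (at 0)"
      by (simp add: tendsto_cong continuous_on_eq_continuous_at isCont_def)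
    then show ?thesis
      by blast
  qed
qed

lemma Rent_plus_lattice_convergent:
  assumes "n > 0" and "Im \<eta> > 0" and "\<tau> \<in> lat_n n \<eta>"
  shows "\<exists>L. ((\<lambda>t. Rent n k \<eta> t (t + \<tau>) a b i j) \<longlongrightarrow> L) (at 0)"
proof (cases "(a + b) mod n = (i + j) mod n")
  case True
  have "int j - int i + (int b - int i) * (int k - 1) = (int j - int i - (int b - int i)) + int k * (int b - int i)"
    by (simp add: algebra_simps)
  from R_entry_plus_lattice_convergent[OF assms(1,2) this assms(3)] show ?thesis
    using True by (simp add: Rent_eq_R_entry)
qed (auto simp: Rent_eq_R_entry)

lemma tendsto_at_0_reflect:
  fixes f :: "'a :: real_normed_vector \<Rightarrow> 'b :: topological_space"
  assumes "(f \<longlongrightarrow> L) (at 0)"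
  shows "((\<lambda>t. f (- t)) \<longlongrightarrow> L) (at 0)"
  using assms filtermap_at_minus[of "0 :: 'a"] by (simp add: filterlim_filtermap [symmetric])

text \<open>\<open>Lim\<close> of a divergent function is an unspecified value, hence the convergence lemma.\<close>

lemma Rrel_minus:
  assumes "n > 0" and "Im \<eta> > 0"
    and Rent: "\<And>t z. Rent n k \<eta> (- t) (- z) a' b' i' j' = e (of_nat n ^ 2 * z) * Rent n k \<eta> t z a b i j"
  shows "Rrel n k \<eta> (- \<tau>) a' b' i' j' = e (of_nat n ^ 2 * \<tau>) * Rrel n k \<eta> \<tau> a b i j"
proof (cases "\<tau> \<in> lat_n n \<eta>")
  case False
  then show ?thesis
    unfolding Rrel_def uminus_in_lat_n_iff by (simp add: Rent)
next
  case True
  then obtain L where L: "((\<lambda>t. Rent n k \<eta> t (t + \<tau>) a b i j) \<longlongrightarrow> L) (at 0)"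
    using Rent_plus_lattice_convergent[OF assms(1,2)] by blast
  have "Rent n k \<eta> t (t + - \<tau>) a' b' i' j' = e (of_nat n ^ 2 * (\<tau> - t)) * Rent n k \<eta> (- t) (- t + \<tau>) a b i j" for t
    using Rent[of "- t" "\<tau> - t"] by (simp add: add.commute)
  moreover have "((\<lambda>t. e (of_nat n ^ 2 * (\<tau> - t)) * Rent n k \<eta> (- t) (- t + \<tau>) a b i j)
      \<longlongrightarrow> e (of_nat n ^ 2 * (\<tau> - 0)) * L) (at 0)"
    by (intro tendsto_intros tendsto_at_0_reflect[OF L])
  ultimately have "((\<lambda>t. Rent n k \<eta> t (t + - \<tau>) a' b' i' j') \<longlongrightarrow> e (of_nat n ^ 2 * \<tau>) * L) (at 0)"
    by simp
  then show ?thesis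
    using True uminus_in_lat_n_iff[of \<tau>] L unfolding Rrel_def by (simp add: tendsto_Lim)
qed

section \<open>The tensor algebra and its quotients\<close>

lemma TV_letters: "f \<in> TV n \<Longrightarrow> f w \<noteq> 0 \<Longrightarrow> x \<in> set w \<Longrightarrow> x < n"
  unfolding TV_def by blast

lemma TV_finite_support: "f \<in> TV n \<Longrightarrow> finite {w. f w \<noteq> 0}"
  unfolding TV_def by blast

lemma TV_zero: "(\<lambda>_. 0) \<in> TV n"
  unfolding TV_def by simp

lemma TV_add: "f \<in> TV n \<Longrightarrow> g \<in> TV n \<Longrightarrow> (\<lambda>w. f w + g w) \<in> TV n"
proof -
  assume f: "f \<in> TV n" and g: "g \<in> TV n"
  have "{w. f w + g w \<noteq> 0} \<subseteq> {w. f w \<noteq> 0} \<union> {w. g w \<noteq> 0}"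
    by auto
  then have "finite {w. f w + g w \<noteq> 0}"
    by (rule finite_subset) (simp add: TV_finite_support[OF f] TV_finite_support[OF g])
  moreover have "x < n" if "f w + g w \<noteq> 0" "x \<in> set w" for w x
    using that TV_letters[OF f, of w x] TV_letters[OF g, of w x] by (cases "f w = 0") auto
  ultimately show ?thesis
    unfolding TV_def by blast
qed

lemma TV_scale: "f \<in> TV n \<Longrightarrow> (\<lambda>w. c * f w) \<in> TV n"
  unfolding TV_def by (auto elim: rev_finite_subset)

lemma TV_tone: "tone \<in> TV n"
  unfolding TV_def tone_def by simp

lemma TV_xgen: "\<alpha> < n \<Longrightarrow> xgen \<alpha> \<in> TV n"
  unfolding TV_def xgen_def by simp

lemma tmul_neq_zero_split:
  assumes "tmul f g w \<noteq> 0"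
  obtains u v where "w = u @ v" "f u \<noteq> 0" "g v \<noteq> 0"
proof -
  from assms obtain i where "f (take i w) * g (drop i w) \<noteq> 0"
    unfolding tmul_def by (metis (no_types, lifting) sum.neutral)
  then show ?thesis
    using that[of "take i w" "drop i w"] by simp
qed

lemma TV_tmul:
  assumes f: "f \<in> TV n" and g: "g \<in> TV n"
  shows "tmul f g \<in> TV n"
proof -
  have "{w. tmul f g w \<noteq> 0} \<subseteq> (\<lambda>(u, v). u @ v) ` ({u. f u \<noteq> 0} \<times> {v. g v \<noteq> 0})"
    by (force elim: tmul_neq_zero_split)
  then have "finite {w. tmul f g w \<noteq> 0}"
    by (rule finite_subset) (intro finite_imageI finite_cartesian_product TV_finite_support[OF f] TV_finite_support[OF g])
  moreover have "x < n" if "tmul f g w \<noteq> 0" "x \<in> set w" for w x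
    using that(1) by (rule tmul_neq_zero_split) (use that(2) f g TV_letters in auto)
  ultimately show ?thesis
    unfolding TV_def by blast
qed

lemma tmul_diff_left: "tmul (\<lambda>w. f w - g w) h = (\<lambda>w. tmul f h w - tmul g h w)"
  unfolding tmul_def by (simp add: left_diff_distrib sum_subtractf)

lemma tmul_diff_right: "tmul h (\<lambda>w. f w - g w) = (\<lambda>w. tmul h f w - tmul h g w)"
  unfolding tmul_def by (simp add: right_diff_distrib sum_subtractf)

lemma tmul_scale_tone: "tmul (\<lambda>w. c * tone w) f = (\<lambda>w. c * f w)"
proof
  fix w
  have "tmul (\<lambda>w. c * tone w) f w = (\<Sum>i\<le>length w. if i = 0 then c * f w else 0)"
    unfolding tmul_def tone_def by (rule sum.cong) auto
  then show "tmul (\<lambda>w. c * tone w) f w = c * f w"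
    by simp
qed

lemma gen_ideal_subset_TV:
  assumes "K \<subseteq> TV n"
  shows "gen_ideal n K \<subseteq> TV n"
proof
  fix x assume "x \<in> gen_ideal n K"
  then show "x \<in> TV n"
    by (induction rule: gen_ideal.induct) (use assms in \<open>auto intro: TV_zero TV_add TV_tmul\<close>)
qed

lemma gen_ideal_scale: "x \<in> gen_ideal n K \<Longrightarrow> (\<lambda>w. c * x w) \<in> gen_ideal n K"
  using gen_ideal.lmul[of x n K "\<lambda>w. c * tone w"] TV_scale[OF TV_tone] by (simp add: tmul_scale_tone)

lemma gen_ideal_diff: "x \<in> gen_ideal n K \<Longrightarrow> y \<in> gen_ideal n K \<Longrightarrow> (\<lambda>w. x w - y w) \<in> gen_ideal n K"
  using gen_ideal.add[of x n K "\<lambda>w. (-1) * y w"] gen_ideal_scale[of y n K "-1"] by simp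

lemma mem_qcls_self: "f \<in> TV n \<Longrightarrow> f \<in> qcls n (gen_ideal n K) f"
  unfolding qcls_def by (simp add: gen_ideal.zero)

lemma qcls_eq_iff:
  assumes "f \<in> TV n" and "g \<in> TV n"
  shows "qcls n (gen_ideal n K) f = qcls n (gen_ideal n K) g \<longleftrightarrow> (\<lambda>w. f w - g w) \<in> gen_ideal n K"
proof
  assume "qcls n (gen_ideal n K) f = qcls n (gen_ideal n K) g"
  then show "(\<lambda>w. f w - g w) \<in> gen_ideal n K"
    using mem_qcls_self[OF assms(2)] unfolding qcls_def by auto
next
  assume fg: "(\<lambda>w. f w - g w) \<in> gen_ideal n K"
  have "(\<lambda>w. f w - h w) \<in> gen_ideal n K \<longleftrightarrow> (\<lambda>w. g w - h w) \<in> gen_ideal n K" for h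
    using gen_ideal_diff[OF _ fg, of "\<lambda>w. f w - h w"] gen_ideal.add[OF fg, of "\<lambda>w. g w - h w"] by auto
  then show "qcls n (gen_ideal n K) f = qcls n (gen_ideal n K) g"
    unfolding qcls_def by blast
qed

lemma qrep_qcls:
  assumes "f \<in> TV n"
  shows "qrep (qcls n (gen_ideal n K) f) \<in> TV n"
    and "(\<lambda>w. f w - qrep (qcls n (gen_ideal n K) f) w) \<in> gen_ideal n K"
proof -
  have "qrep (qcls n (gen_ideal n K) f) \<in> qcls n (gen_ideal n K) f"
    unfolding qrep_def by (rule someI[where P = "\<lambda>g. g \<in> qcls n (gen_ideal n K) f", OF mem_qcls_self[OF assms]])
  then show "qrep (qcls n (gen_ideal n K) f) \<in> TV n"
    and "(\<lambda>w. f w - qrep (qcls n (gen_ideal n K) f) w) \<in> gen_ideal n K"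
    unfolding qcls_def by auto
qed

lemma qcar_qrep:
  assumes "A \<in> qcar n (gen_ideal n K)"
  shows "qrep A \<in> TV n" and "A = qcls n (gen_ideal n K) (qrep A)"
proof -
  from assms obtain f where f: "f \<in> TV n" and A: "A = qcls n (gen_ideal n K) f"
    unfolding qcar_def by blast
  show "qrep A \<in> TV n"
    using qrep_qcls(1)[OF f] A by simp
  show "A = qcls n (gen_ideal n K) (qrep A)"
    using qrep_qcls[OF f] qcls_eq_iff[OF f] A by simp
qed

lemma qcls_add_cong:
  assumes "u \<in> TV n" "u' \<in> TV n" "v \<in> TV n" "v' \<in> TV n"
    and "(\<lambda>w. u w - u' w) \<in> gen_ideal n K" "(\<lambda>w. v w - v' w) \<in> gen_ideal n K"
  shows "qcls n (gen_ideal n K) (\<lambda>w. u w + v w) = qcls n (gen_ideal n K) (\<lambda>w. u' w + v' w)"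
proof -
  have "(\<lambda>w. (u w + v w) - (u' w + v' w)) = (\<lambda>w. (u w - u' w) + (v w - v' w))"
    by (simp add: fun_eq_iff)
  then show ?thesis
    using assms by (subst qcls_eq_iff) (auto intro: TV_add gen_ideal.add)
qed

lemma qcls_scale_cong:
  assumes "u \<in> TV n" "u' \<in> TV n" and "(\<lambda>w. u w - u' w) \<in> gen_ideal n K"
  shows "qcls n (gen_ideal n K) (\<lambda>w. c * u w) = qcls n (gen_ideal n K) (\<lambda>w. c * u' w)"
proof -
  have "(\<lambda>w. c * u w - c * u' w) = (\<lambda>w. c * (u w - u' w))"
    by (simp add: fun_eq_iff algebra_simps)
  then show ?thesis
    using assms by (subst qcls_eq_iff) (auto intro: TV_scale gen_ideal_scale)
qed

lemma qcls_mul_cong: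
  assumes "u \<in> TV n" "u' \<in> TV n" "v \<in> TV n" "v' \<in> TV n"
    and "(\<lambda>w. u w - u' w) \<in> gen_ideal n K" "(\<lambda>w. v w - v' w) \<in> gen_ideal n K"
  shows "qcls n (gen_ideal n K) (tmul u v) = qcls n (gen_ideal n K) (tmul u' v')"
proof -
  have "(\<lambda>w. tmul u v w - tmul u' v' w) = (\<lambda>w. tmul (\<lambda>w. u w - u' w) v w + tmul u' (\<lambda>w. v w - v' w) w)"
    unfolding tmul_diff_left tmul_diff_right by (simp add: fun_eq_iff)
  then show ?thesis
    using assms by (subst qcls_eq_iff) (auto intro: TV_tmul gen_ideal.add gen_ideal.lmul gen_ideal.rmul)
qed

section \<open>Involutions and anti-involutions of the tensor algebra\<close>

definition induced_map ::
    "nat \<Rightarrow> (nat list \<Rightarrow> complex) set \<Rightarrow> ((nat list \<Rightarrow> complex) \<Rightarrow> nat list \<Rightarrow> complex)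
      \<Rightarrow> (nat list \<Rightarrow> complex) set \<Rightarrow> (nat list \<Rightarrow> complex) set" where
  "induced_map n J \<sigma> A = qcls n J (\<sigma> (qrep A))"

locale tensor_involution =
  fixes n :: nat and \<sigma> :: "(nat list \<Rightarrow> complex) \<Rightarrow> nat list \<Rightarrow> complex" and anti :: bool
  assumes closed: "f \<in> TV n \<Longrightarrow> \<sigma> f \<in> TV n"
    and involutive: "f \<in> TV n \<Longrightarrow> \<sigma> (\<sigma> f) = f"
    and additive: "\<sigma> (\<lambda>w. f w + g w) = (\<lambda>w. \<sigma> f w + \<sigma> g w)"
    and homogeneous: "\<sigma> (\<lambda>w. c * f w) = (\<lambda>w. c * \<sigma> f w)"
    and unital: "\<sigma> tone = tone"
    and multiplicative: "f \<in> TV n \<Longrightarrow> g \<in> TV n \<Longrightarrow>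
      \<sigma> (tmul f g) = (if anti then tmul (\<sigma> g) (\<sigma> f) else tmul (\<sigma> f) (\<sigma> g))"
begin

lemma map_zero: "\<sigma> (\<lambda>_. 0) = (\<lambda>_. 0)"
  using homogeneous[of 0 "\<lambda>_. 0"] by simp

lemma map_diff: "\<sigma> (\<lambda>w. f w - g w) = (\<lambda>w. \<sigma> f w - \<sigma> g w)"
  using additive[of f "\<lambda>w. (-1) * g w"] homogeneous[of "-1" g] by simp

lemma image_gen_ideal_subset:
  assumes "K \<subseteq> TV n" and "\<sigma> ` K \<subseteq> K'"
  shows "\<sigma> ` gen_ideal n K \<subseteq> gen_ideal n K'"
proof -
  have "\<sigma> x \<in> gen_ideal n K'" if "x \<in> gen_ideal n K" for x
    using that
  proof (induction rule: gen_ideal.induct)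
    case (gen x)
    then show ?case
      using assms(2) by (auto intro: gen_ideal.gen)
  next
    case zero
    show ?case
      unfolding map_zero by (rule gen_ideal.zero)
  next
    case (add x y)
    show ?case
      unfolding additive by (rule gen_ideal.add[OF add.IH])
  next
    case (lmul x t)
    then have "x \<in> TV n"
      using gen_ideal_subset_TV[OF assms(1)] by blast
    then show ?case
      unfolding multiplicative[OF lmul.hyps(2) \<open>x \<in> TV n\<close>]
      using gen_ideal.lmul[OF lmul.IH closed] gen_ideal.rmul[OF lmul.IH closed] lmul.hyps(2) by simp
  next
    case (rmul x t)
    then have "x \<in> TV n"
      using gen_ideal_subset_TV[OF assms(1)] by blast
    then show ?case
      unfolding multiplicative[OF \<open>x \<in> TV n\<close> rmul.hyps(2)]
      using gen_ideal.lmul[OF rmul.IH closed] gen_ideal.rmul[OF rmul.IH closed] rmul.hyps(2) by simp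
  qed
  then show ?thesis
    by blast
qed

lemma image_image_involutive: "K \<subseteq> TV n \<Longrightarrow> \<sigma> ` \<sigma> ` K = K"
  unfolding image_image using involutive by (simp add: subset_eq)

lemma image_gen_ideal:
  assumes "K \<subseteq> TV n"
  shows "\<sigma> ` gen_ideal n K = gen_ideal n (\<sigma> ` K)"
proof
  show "\<sigma> ` gen_ideal n K \<subseteq> gen_ideal n (\<sigma> ` K)"
    using assms by (rule image_gen_ideal_subset) simp
  have "\<sigma> ` K \<subseteq> TV n"
    using assms closed by auto
  then have "\<sigma> ` gen_ideal n (\<sigma> ` K) \<subseteq> gen_ideal n K"
    by (rule image_gen_ideal_subset) (simp add: image_image_involutive[OF assms])
  moreover have "x = \<sigma> (\<sigma> x)" if "x \<in> gen_ideal n (\<sigma> ` K)" for x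
    using that gen_ideal_subset_TV[OF \<open>\<sigma> ` K \<subseteq> TV n\<close>] involutive by auto
  ultimately show "gen_ideal n (\<sigma> ` K) \<subseteq> \<sigma> ` gen_ideal n K"
    by blast
qed

context
  fixes K :: "(nat list \<Rightarrow> complex) set"
  assumes K_TV: "K \<subseteq> TV n"
begin

abbreviation (input) "I \<equiv> gen_ideal n K"
abbreviation (input) "J \<equiv> gen_ideal n (\<sigma> ` K)"
abbreviation (input) "\<Phi> \<equiv> induced_map n J \<sigma>"

lemma maps_ideal: "x \<in> I \<Longrightarrow> \<sigma> x \<in> J"
  using image_gen_ideal[OF K_TV] by blast

lemma maps_ideal_back: "x \<in> J \<Longrightarrow> \<sigma> x \<in> I"
proof -
  have "\<sigma> ` K \<subseteq> TV n"
    using K_TV closed by auto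
  then have "\<sigma> ` J = I"
    by (simp add: image_gen_ideal image_image_involutive[OF K_TV])
  then show "x \<in> J \<Longrightarrow> \<sigma> x \<in> I"
    by blast
qed

lemma induced_map_qcls:
  assumes "f \<in> TV n"
  shows "\<Phi> (qcls n I f) = qcls n J (\<sigma> f)"
proof -
  note r = qrep_qcls[OF assms, of K]
  have "(\<lambda>w. \<sigma> f w - \<sigma> (qrep (qcls n I f)) w) \<in> J"
    using maps_ideal[OF r(2)] by (simp add: map_diff)
  then have "qcls n J (\<sigma> f) = qcls n J (\<sigma> (qrep (qcls n I f)))"
    using closed assms r(1) by (simp add: qcls_eq_iff)
  then show ?thesis
    unfolding induced_map_def by simp
qed

lemma induced_map_qcar:
  assumes "A \<in> qcar n I"
  obtains f where "f \<in> TV n" "A = qcls n I f" "\<Phi> A = qcls n J (\<sigma> f)"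
  using assms induced_map_qcls unfolding qcar_def by blast

lemma bij_betw_induced_map: "bij_betw \<Phi> (qcar n I) (qcar n J)"
proof (rule bij_betw_imageI)
  show "inj_on \<Phi> (qcar n I)"
  proof (rule inj_onI)
    fix A B assume "A \<in> qcar n I" "B \<in> qcar n I" and eq: "\<Phi> A = \<Phi> B"
    then obtain f g where f: "f \<in> TV n" "A = qcls n I f" "\<Phi> A = qcls n J (\<sigma> f)"
      and g: "g \<in> TV n" "B = qcls n I g" "\<Phi> B = qcls n J (\<sigma> g)"
      by (metis induced_map_qcar)
    have "(\<lambda>w. \<sigma> f w - \<sigma> g w) \<in> J"
      using eq f g closed by (simp add: qcls_eq_iff)
    then have "\<sigma> (\<lambda>w. \<sigma> f w - \<sigma> g w) \<in> I"
      by (rule maps_ideal_back)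
    then show "A = B"
      using f g by (simp add: map_diff involutive qcls_eq_iff)
  qed
  show "\<Phi> ` qcar n I = qcar n J"
  proof
    show "\<Phi> ` qcar n I \<subseteq> qcar n J"
    proof
      fix B assume "B \<in> \<Phi> ` qcar n I"
      then obtain f where "f \<in> TV n" "B = qcls n J (\<sigma> f)"
        by (metis imageE induced_map_qcar)
      then show "B \<in> qcar n J"
        using closed unfolding qcar_def by blast
    qed
    show "qcar n J \<subseteq> \<Phi> ` qcar n I"
    proof
      fix B assume "B \<in> qcar n J"
      then obtain g where g: "g \<in> TV n" "B = qcls n J g"
        unfolding qcar_def by blast
      then have "\<Phi> (qcls n I (\<sigma> g)) = B"
        using induced_map_qcls[OF closed[OF g(1)]] involutive by simp
      then show "B \<in> \<Phi> ` qcar n I"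
        using closed[OF g(1)] unfolding qcar_def by blast
    qed
  qed
qed

lemma qrep_induced_map:
  assumes "A \<in> qcar n I"
  shows "\<sigma> (qrep A) \<in> TV n" and "qrep (\<Phi> A) \<in> TV n"
    and "(\<lambda>w. \<sigma> (qrep A) w - qrep (\<Phi> A) w) \<in> J"
  using closed[OF qcar_qrep(1)[OF assms]] qrep_qcls[OF closed[OF qcar_qrep(1)[OF assms]], of "\<sigma> ` K"]
  unfolding induced_map_def by auto

lemma induced_map_one: "\<Phi> (qcls n I tone) = qcls n J tone"
  using induced_map_qcls[OF TV_tone] by (simp add: unital)

lemma induced_map_qadd:
  assumes "A \<in> qcar n I" and "B \<in> qcar n I"
  shows "\<Phi> (qadd n I A B) = qadd n J (\<Phi> A) (\<Phi> B)"
proof -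
  note a = qcar_qrep(1)[OF assms(1)] qrep_induced_map[OF assms(1)]
  note b = qcar_qrep(1)[OF assms(2)] qrep_induced_map[OF assms(2)]
  have "\<Phi> (qadd n I A B) = qcls n J (\<lambda>w. \<sigma> (qrep A) w + \<sigma> (qrep B) w)"
    unfolding qadd_def induced_map_qcls[OF TV_add[OF a(1) b(1)]] additive ..
  also have "\<dots> = qadd n J (\<Phi> A) (\<Phi> B)"
    unfolding qadd_def using a b by (intro qcls_add_cong)
  finally show ?thesis .
qed

lemma induced_map_qscale:
  assumes "A \<in> qcar n I"
  shows "\<Phi> (qscale n I c A) = qscale n J c (\<Phi> A)"
proof -
  note a = qcar_qrep(1)[OF assms] qrep_induced_map[OF assms]
  have "\<Phi> (qscale n I c A) = qcls n J (\<lambda>w. c * \<sigma> (qrep A) w)"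
    unfolding qscale_def induced_map_qcls[OF TV_scale[OF a(1)]] homogeneous ..
  also have "\<dots> = qscale n J c (\<Phi> A)"
    unfolding qscale_def using a by (intro qcls_scale_cong)
  finally show ?thesis .
qed

lemma induced_map_qmul:
  assumes "A \<in> qcar n I" and "B \<in> qcar n I"
  shows "\<Phi> (qmul n I A B) = (if anti then qmul n J (\<Phi> B) (\<Phi> A) else qmul n J (\<Phi> A) (\<Phi> B))"
proof -
  note a = qcar_qrep(1)[OF assms(1)] qrep_induced_map[OF assms(1)]
  note b = qcar_qrep(1)[OF assms(2)] qrep_induced_map[OF assms(2)]
  have "\<Phi> (qmul n I A B) = qcls n J (\<sigma> (tmul (qrep A) (qrep B)))"
    unfolding qmul_def by (rule induced_map_qcls[OF TV_tmul[OF a(1) b(1)]])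
  also have "\<dots> = (if anti then qmul n J (\<Phi> B) (\<Phi> A) else qmul n J (\<Phi> A) (\<Phi> B))"
    unfolding multiplicative[OF a(1) b(1)] qmul_def
    using qcls_mul_cong[OF b(2,3) a(2,3) b(4) a(4)] qcls_mul_cong[OF a(2,3) b(2,3) a(4) b(4)] by simp
  finally show ?thesis .
qed

lemma alg_iso_induced_map: "\<not> anti \<Longrightarrow> alg_iso n I J \<Phi>"
  unfolding alg_iso_def
  using bij_betw_induced_map induced_map_one induced_map_qadd induced_map_qmul induced_map_qscale
  by (simp add: K_TV)

lemma alg_iso_op_induced_map: "anti \<Longrightarrow> alg_iso_op n I J \<Phi>"
  unfolding alg_iso_op_def
  using bij_betw_induced_map induced_map_one induced_map_qadd induced_map_qmul induced_map_qscale
  by (simp add: K_TV)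

end

end

lemma tensor_involution_compose:
  assumes "tensor_involution n \<sigma> a" and "tensor_involution n \<rho> b"
    and commute: "\<And>f. f \<in> TV n \<Longrightarrow> \<sigma> (\<rho> f) = \<rho> (\<sigma> f)"
  shows "tensor_involution n (\<lambda>f. \<sigma> (\<rho> f)) (a \<noteq> b)"
proof -
  interpret S: tensor_involution n \<sigma> a by fact
  interpret R: tensor_involution n \<rho> b by fact
  show ?thesis
  proof
    fix f g :: "nat list \<Rightarrow> complex" and c :: complex
    show "f \<in> TV n \<Longrightarrow> \<sigma> (\<rho> f) \<in> TV n"
      by (simp add: S.closed R.closed)
    show "f \<in> TV n \<Longrightarrow> \<sigma> (\<rho> (\<sigma> (\<rho> f))) = f"
      by (metis commute S.closed S.involutive R.closed R.involutive)
    show "\<sigma> (\<rho> (\<lambda>w. f w + g w)) = (\<lambda>w. \<sigma> (\<rho> f) w + \<sigma> (\<rho> g) w)"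
      by (simp add: S.additive R.additive)
    show "\<sigma> (\<rho> (\<lambda>w. c * f w)) = (\<lambda>w. c * \<sigma> (\<rho> f) w)"
      by (simp add: S.homogeneous R.homogeneous)
    show "\<sigma> (\<rho> tone) = tone"
      by (simp add: S.unital R.unital)
    show "f \<in> TV n \<Longrightarrow> g \<in> TV n \<Longrightarrow> \<sigma> (\<rho> (tmul f g))
        = (if a \<noteq> b then tmul (\<sigma> (\<rho> g)) (\<sigma> (\<rho> f)) else tmul (\<sigma> (\<rho> f)) (\<sigma> (\<rho> g)))"
      by (simp add: S.multiplicative R.multiplicative R.closed)
  qed
qed

section \<open>The involution \<open>N\<close> and word reversal\<close>

lemma letters_take_drop: "(\<forall>x\<in>set w. P x) \<longleftrightarrow> (\<forall>x\<in>set (take i w). P x) \<and> (\<forall>x\<in>set (drop i w). P x)"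
  by (metis Un_iff append_take_drop_id set_append)

text \<open>\<open>negmod n\<close> is not injective on all of \<open>nat\<close>; the guard keeps \<open>tneg n f\<close> finitely supported.\<close>

definition tneg :: "nat \<Rightarrow> (nat list \<Rightarrow> complex) \<Rightarrow> nat list \<Rightarrow> complex" where
  "tneg n f w = (if \<forall>x\<in>set w. x < n then f (map (negmod n) w) else 0)"

lemma map_negmod_involutive: "\<forall>x\<in>set w. x < n \<Longrightarrow> map (negmod n) (map (negmod n) w) = w"
  by (induction w) (auto simp: negmod_negmod)

lemma TV_tneg:
  assumes f: "f \<in> TV n"
  shows "tneg n f \<in> TV n"
proof -
  have "{w. tneg n f w \<noteq> 0} \<subseteq> map (negmod n) ` {w. f w \<noteq> 0}"
  proof
    fix w assume "w \<in> {w. tneg n f w \<noteq> 0}"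
    then have "\<forall>x\<in>set w. x < n" and "f (map (negmod n) w) \<noteq> 0"
      unfolding tneg_def by (auto split: if_splits)
    then show "w \<in> map (negmod n) ` {w. f w \<noteq> 0}"
      using map_negmod_involutive by (metis (mono_tags) image_eqI mem_Collect_eq)
  qed
  then have "finite {w. tneg n f w \<noteq> 0}"
    by (rule finite_subset) (simp add: TV_finite_support[OF f])
  then show "tneg n f \<in> TV n"
    unfolding TV_def tneg_def by (auto split: if_splits)
qed

lemma tneg_tneg:
  assumes "n > 0" and f: "f \<in> TV n"
  shows "tneg n (tneg n f) = f"
proof
  fix w
  show "tneg n (tneg n f) w = f w"
  proof (cases "\<forall>x\<in>set w. x < n")
    case True
    moreover have "\<forall>x\<in>set (map (negmod n) w). x < n"
      using negmod_less[OF assms(1)] by auto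
    ultimately show ?thesis
      unfolding tneg_def by (simp add: map_negmod_involutive del: map_map)
  next
    case False
    then show ?thesis
      unfolding tneg_def using TV_letters[OF f] by auto
  qed
qed

lemma tneg_tmul: "tneg n (tmul f g) = tmul (tneg n f) (tneg n g)"
proof
  fix w
  show "tneg n (tmul f g) w = tmul (tneg n f) (tneg n g) w"
  proof (cases "\<forall>x\<in>set w. x < n")
    case True
    then have "\<forall>x\<in>set (take i w). x < n" "\<forall>x\<in>set (drop i w). x < n" for i
      by (meson in_set_takeD in_set_dropD)+
    with True show ?thesis
      unfolding tneg_def tmul_def by (simp add: take_map drop_map)
  next
    case False
    then have summand: "tneg n f (take i w) * tneg n g (drop i w) = 0" for i
      using letters_take_drop[of w "\<lambda>x. x < n" i] unfolding tneg_def by auto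
    have "tmul (tneg n f) (tneg n g) w = 0"
      unfolding tmul_def by (intro sum.neutral ballI summand)
    with False show ?thesis
      by (auto simp: tneg_def)
  qed
qed

lemma tensor_involution_tneg: "n > 0 \<Longrightarrow> tensor_involution n (tneg n) False"
  by unfold_locales (simp_all add: TV_tneg tneg_tneg tneg_tmul, simp_all add: tneg_def tone_def fun_eq_iff)

lemma TV_trev:
  assumes "f \<in> TV n"
  shows "trev f \<in> TV n"
proof -
  have "{w. trev f w \<noteq> 0} = rev ` {w. f w \<noteq> 0}"
    unfolding trev_def by (auto intro: image_eqI[of _ rev "rev w" for w])
  then show ?thesis
    using assms unfolding TV_def trev_def by auto
qed

lemma trev_tmul: "trev (tmul f g) = tmul (trev g) (trev f)"
proof
  fix w :: "nat list"
  have "bij_betw (\<lambda>i. length w - i) {..length w} {..length w}"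
    by (rule bij_betwI[where g = "\<lambda>i. length w - i"]) auto
  then have "(\<Sum>i\<le>length w. f (take (length w - i) (rev w)) * g (drop (length w - i) (rev w)))
      = (\<Sum>i\<le>length w. f (take i (rev w)) * g (drop i (rev w)))"
    by (rule sum.reindex_bij_betw)
  then show "trev (tmul f g) w = tmul (trev g) (trev f) w"
    unfolding trev_def tmul_def by (simp add: take_rev drop_rev mult.commute)
qed

lemma tensor_involution_trev: "tensor_involution n trev True"
  by unfold_locales (simp_all add: TV_trev trev_tmul, simp_all add: trev_def tone_def fun_eq_iff)

lemma tneg_trev: "n > 0 \<Longrightarrow> tneg n (trev f) = trev (tneg n f)"
  by (simp add: tneg_def trev_def fun_eq_iff rev_map)

lemma tneg_xgen:
  assumes "\<alpha> < n"
  shows "tneg n (xgen \<alpha>) = xgen (negmod n \<alpha>)"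
proof
  fix w
  have "(\<forall>x\<in>set w. x < n) \<and> map (negmod n) w = [\<alpha>] \<longleftrightarrow> w = [negmod n \<alpha>]"
    using assms negmod_less[of n \<alpha>] negmod_negmod[OF assms] map_negmod_involutive[of w n]
    by (auto simp: negmod_negmod)
  then show "tneg n (xgen \<alpha>) w = xgen (negmod n \<alpha>) w"
    unfolding tneg_def xgen_def by auto
qed

lemma trev_xgen: "trev (xgen \<alpha>) = xgen \<alpha>"
  by (auto simp: trev_def xgen_def fun_eq_iff)

lemma kerR_subset_TV: "kerR n k \<eta> \<tau> \<subseteq> TV n"
  unfolding kerR_def by auto

lemma tneg_kerR:
  assumes "n > 0" and "Im \<eta> > 0" and f: "f \<in> kerR n k \<eta> \<tau>"
  shows "tneg n f \<in> kerR n k \<eta> (- \<tau>)"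
proof -
  interpret tensor_involution n "tneg n" False
    by (rule tensor_involution_tneg[OF assms(1)])
  have "f \<in> TV n" and len: "\<And>w. f w \<noteq> 0 \<Longrightarrow> length w = 2"
    and rel: "\<And>a b. a < n \<Longrightarrow> b < n \<Longrightarrow> (\<Sum>i<n. \<Sum>j<n. Rrel n k \<eta> \<tau> a b i j * f [i, j]) = 0"
    using f unfolding kerR_def by auto
  have "length w = 2" if "tneg n f w \<noteq> 0" for w
    using that len[of "map (negmod n) w"] unfolding tneg_def by (auto split: if_splits)
  moreover have "(\<Sum>i<n. \<Sum>j<n. Rrel n k \<eta> (- \<tau>) a b i j * tneg n f [i, j]) = 0" if "a < n" "b < n" for a b
  proof -
    define c where "c = e (of_nat n ^ 2 * \<tau>)"
    have Rrel: "Rrel n k \<eta> (- \<tau>) a b (negmod n i) (negmod n j) = c * Rrel n k \<eta> \<tau> (negmod n a) (negmod n b) i j"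
      if "i < n" "j < n" for i j
      using Rrel_minus[OF assms(1,2) Rent_minus_negmod[of "negmod n a" n "negmod n b" i j]]
        \<open>a < n\<close> \<open>b < n\<close> that negmod_less[OF assms(1)] by (simp add: negmod_negmod c_def)
    have "(\<Sum>i<n. \<Sum>j<n. Rrel n k \<eta> (- \<tau>) a b i j * tneg n f [i, j])
        = (\<Sum>i<n. \<Sum>j<n. Rrel n k \<eta> (- \<tau>) a b (negmod n i) (negmod n j) * tneg n f [negmod n i, negmod n j])"
      by (rule sum2_negmod_reindex[symmetric])
    also have "\<dots> = c * (\<Sum>i<n. \<Sum>j<n. Rrel n k \<eta> \<tau> (negmod n a) (negmod n b) i j * f [i, j])"
      by (simp add: Rrel tneg_def negmod_less[OF assms(1)] negmod_negmod sum_distrib_left mult.assoc)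
    also have "\<dots> = 0"
      by (simp add: rel negmod_less[OF assms(1)])
    finally show ?thesis .
  qed
  ultimately show ?thesis
    using closed[OF \<open>f \<in> TV n\<close>] unfolding kerR_def by blast
qed

lemma trev_kerR:
  assumes "n > 0" and "Im \<eta> > 0" and f: "f \<in> kerR n k \<eta> \<tau>"
  shows "trev f \<in> kerR n k \<eta> (- \<tau>)"
proof -
  interpret tensor_involution n trev True
    by (rule tensor_involution_trev)
  have "f \<in> TV n" and len: "\<And>w. f w \<noteq> 0 \<Longrightarrow> length w = 2"
    and rel: "\<And>a b. a < n \<Longrightarrow> b < n \<Longrightarrow> (\<Sum>i<n. \<Sum>j<n. Rrel n k \<eta> \<tau> a b i j * f [i, j]) = 0"
    using f unfolding kerR_def by auto
  have "length w = 2" if "trev f w \<noteq> 0" for w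
    using that len[of "rev w"] unfolding trev_def by simp
  moreover have "(\<Sum>i<n. \<Sum>j<n. Rrel n k \<eta> (- \<tau>) a b i j * trev f [i, j]) = 0" if "a < n" "b < n" for a b
  proof -
    define c where "c = e (of_nat n ^ 2 * \<tau>)"
    have Rrel: "Rrel n k \<eta> (- \<tau>) a b i j = c * Rrel n k \<eta> \<tau> b a j i" for i j
      using Rrel_minus[OF assms(1,2) Rent_minus_swap[OF assms(1), where a = b and b = a and i = j and j = i]] by (simp add: c_def)
    have "(\<Sum>i<n. \<Sum>j<n. Rrel n k \<eta> (- \<tau>) a b i j * trev f [i, j])
        = (\<Sum>j<n. \<Sum>i<n. Rrel n k \<eta> (- \<tau>) a b i j * f [j, i])"
      by (subst sum.swap) (simp add: trev_def)
    also have "\<dots> = c * (\<Sum>j<n. \<Sum>i<n. Rrel n k \<eta> \<tau> b a j i * f [j, i])"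
      by (simp add: Rrel sum_distrib_left mult.assoc)
    also have "\<dots> = 0"
      by (simp add: rel that)
    finally show ?thesis .
  qed
  ultimately show ?thesis
    using closed[OF \<open>f \<in> TV n\<close>] unfolding kerR_def by blast
qed

lemma image_kerR:
  assumes "tensor_involution n \<sigma> anti"
    and maps: "\<And>f \<tau>. f \<in> kerR n k \<eta> \<tau> \<Longrightarrow> \<sigma> f \<in> kerR n k \<eta> (- \<tau>)"
  shows "\<sigma> ` kerR n k \<eta> \<tau> = kerR n k \<eta> (- \<tau>)"
proof
  show "\<sigma> ` kerR n k \<eta> \<tau> \<subseteq> kerR n k \<eta> (- \<tau>)"
    using maps by blast
  show "kerR n k \<eta> (- \<tau>) \<subseteq> \<sigma> ` kerR n k \<eta> \<tau>"
  proof
    fix g assume g: "g \<in> kerR n k \<eta> (- \<tau>)"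
    then have "g = \<sigma> (\<sigma> g)"
      using kerR_subset_TV tensor_involution.involutive[OF assms(1)] by (metis subsetD)
    moreover have "\<sigma> g \<in> kerR n k \<eta> \<tau>"
      using maps[OF g] by simp
    ultimately show "g \<in> \<sigma> ` kerR n k \<eta> \<tau>"
      by blast
  qed
qed

lemma tneg_image_kerR: "n > 0 \<Longrightarrow> Im \<eta> > 0 \<Longrightarrow> tneg n ` kerR n k \<eta> \<tau> = kerR n k \<eta> (- \<tau>)"
  by (rule image_kerR[OF tensor_involution_tneg]) (auto intro: tneg_kerR)

lemma trev_image_kerR: "n > 0 \<Longrightarrow> Im \<eta> > 0 \<Longrightarrow> trev ` kerR n k \<eta> \<tau> = kerR n k \<eta> (- \<tau>)"
  by (rule image_kerR[OF tensor_involution_trev]) (auto intro: trev_kerR)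

lemma trev_image_Sideal:
  assumes "n > 0" and "Im \<eta> > 0"
  shows "trev ` Sideal n k \<eta> \<tau> = Sideal n k \<eta> (- \<tau>)"
  unfolding Sideal_def tensor_involution.image_gen_ideal[OF tensor_involution_trev kerR_subset_TV]
  using trev_image_kerR[OF assms] by simp

lemma Sideal_iso_uminus:
  assumes "n > 0" and "Im \<eta> > 0"
  shows "\<exists>\<Phi>. alg_iso n (Sideal n k \<eta> \<tau>) (Sideal n k \<eta> (- \<tau>)) \<Phi>
    \<and> extends_N n (Sideal n k \<eta> \<tau>) (Sideal n k \<eta> (- \<tau>)) \<Phi>"
proof -
  interpret tensor_involution n "tneg n" False
    by (rule tensor_involution_tneg[OF assms(1)])
  define \<Phi> where "\<Phi> = induced_map n (Sideal n k \<eta> (- \<tau>)) (tneg n)"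
  note image = tneg_image_kerR[OF assms, of k \<tau>]
  have "alg_iso n (Sideal n k \<eta> \<tau>) (Sideal n k \<eta> (- \<tau>)) \<Phi>"
    using alg_iso_induced_map[OF kerR_subset_TV[of n k \<eta> \<tau>]] unfolding \<Phi>_def Sideal_def image by simp
  moreover have "\<Phi> (qcls n (Sideal n k \<eta> \<tau>) (xgen \<alpha>)) = qcls n (Sideal n k \<eta> (- \<tau>)) (xgen ((n - \<alpha>) mod n))"
    if "\<alpha> < n" for \<alpha>
    using induced_map_qcls[OF kerR_subset_TV[of n k \<eta> \<tau>] TV_xgen[OF that]] tneg_xgen[OF that]
    unfolding \<Phi>_def Sideal_def image negmod_def by simp
  ultimately show ?thesis
    unfolding extends_N_def by blast
qed

lemma Sideal_iso_op:
  assumes "n > 0" and "Im \<eta> > 0"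
  shows "\<exists>\<Phi>. alg_iso_op n (Sideal n k \<eta> \<tau>) (Sideal n k \<eta> \<tau>) \<Phi>
    \<and> extends_N n (Sideal n k \<eta> \<tau>) (Sideal n k \<eta> \<tau>) \<Phi>"
proof -
  interpret tensor_involution n "\<lambda>f. trev (tneg n f)" True
    using tensor_involution_compose[OF tensor_involution_trev tensor_involution_tneg[OF assms(1)]]
      tneg_trev[OF assms(1)] by simp
  define \<Phi> where "\<Phi> = induced_map n (Sideal n k \<eta> \<tau>) (\<lambda>f. trev (tneg n f))"
  have "(\<lambda>f. trev (tneg n f)) ` kerR n k \<eta> \<tau> = trev ` tneg n ` kerR n k \<eta> \<tau>"
    by (simp only: image_image)
  also have "\<dots> = kerR n k \<eta> \<tau>"
    using trev_image_kerR[OF assms, of k "- \<tau>"] tneg_image_kerR[OF assms, of k \<tau>] by simp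
  finally have image: "(\<lambda>f. trev (tneg n f)) ` kerR n k \<eta> \<tau> = kerR n k \<eta> \<tau>" .
  have "alg_iso_op n (Sideal n k \<eta> \<tau>) (Sideal n k \<eta> \<tau>) \<Phi>"
    using alg_iso_op_induced_map[OF kerR_subset_TV[of n k \<eta> \<tau>]] unfolding \<Phi>_def Sideal_def image by simp
  moreover have "\<Phi> (qcls n (Sideal n k \<eta> \<tau>) (xgen \<alpha>)) = qcls n (Sideal n k \<eta> \<tau>) (xgen ((n - \<alpha>) mod n))"
    if "\<alpha> < n" for \<alpha>
    using induced_map_qcls[OF kerR_subset_TV[of n k \<eta> \<tau>] TV_xgen[OF that]] tneg_xgen[OF that]
    unfolding \<Phi>_def Sideal_def image negmod_def by (simp add: trev_xgen)
  ultimately show ?thesis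
    unfolding extends_N_def by blast
qed

theorem proposition7p1:
  fixes n k :: nat and \<eta> \<tau> :: complex
  assumes "1 \<le> k" and "k < n" and "coprime n k" and "Im \<eta> > 0"
  shows "(\<exists>\<Phi>. alg_iso n (Sideal n k \<eta> \<tau>) (Sideal n k \<eta> (- \<tau>)) \<Phi>
               \<and> extends_N n (Sideal n k \<eta> \<tau>) (Sideal n k \<eta> (- \<tau>)) \<Phi>)
       \<and> (\<exists>\<Phi>. alg_iso_op n (Sideal n k \<eta> \<tau>) (Sideal n k \<eta> \<tau>) \<Phi>
               \<and> extends_N n (Sideal n k \<eta> \<tau>) (Sideal n k \<eta> \<tau>) \<Phi>)
       \<and> trev ` Sideal n k \<eta> \<tau> = Sideal n k \<eta> (- \<tau>)"
proof -
  have "n > 0"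
    using assms(2) by simp
  with assms(4) show ?thesis
    by (simp add: Sideal_iso_uminus Sideal_iso_op trev_image_Sideal)
qed

end
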